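(* Let $\rho_{AB}$ be positive semidefinite on $\mathcal{H}_A\otimes\mathcal{H}_B$ with $0<\operatorname{tr}\rho_{AB}\le1$, and let $\tau_B$ be positive semidefinite on $\mathcal{H}_B$ with $0<\operatorname{tr}\tau_B\le1$ and $\operatorname{supp}\tau_B\supseteq\operatorname{supp}\rho_B$. Then, with $d_A=\dim\mathcal{H}_A$, $$d_u(A|B)_\rho\le\frac12\sqrt{d_A\,\Gamma_C(\rho_{AB}|\tau_B)-\operatorname{tr}\big(\rho_B\tau_B^{-1/2}\rho_B\tau_B^{-1/2}\big)}.$$
   Context: Hilbert spaces are finite-dimensional; inverses are generalized inverses (on the support); $\rho_B=\operatorname{tr}_A\rho_{AB}$. $\Gamma_C(\rho_{AB}|\tau_B):=\operatorname{tr}\big((\rho_{AB}(\mathbb{1}_A\otimes\tau_B^{-1/2}))^2\big)$. Distance from uniform: $d_u(A|B)_\rho=\min_{\sigma_B}\frac12\|\rho_{AB}-\omega_A\otimes\sigma_B\|_1$ where $\omega_A=\mathbb{1}_A/d_A$ and the minimum is over positive semidefinite $\sigma_B$ with $\operatorname{tr}\sigma_B=\operatorname{tr}\rho_B$. *)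

theory Defs
  imports "Jordan_Normal_Form.Schur_Decomposition"
begin

(* Finite-dimensional quantum objects as complex matrices.
   H_A = C^dA, H_B = C^dB, H_A (x) H_B = C^(dA*dB) with basis index a*dB + b. *)

definition mtrace :: "complex mat \<Rightarrow> complex" where
  "mtrace A = (\<Sum>i<dim_row A. A $$ (i,i))"

definition hermitian :: "complex mat \<Rightarrow> bool" where
  "hermitian A \<longleftrightarrow> mat_adjoint A = A"

definition psd :: "nat \<Rightarrow> complex mat \<Rightarrow> bool" where
  "psd n A \<longleftrightarrow> A \<in> carrier_mat n n \<and> hermitian A \<and>
     (\<forall>v \<in> carrier_vec n. 0 \<le> Re ((A *\<^sub>v v) \<bullet>c v))"

definition unitary :: "nat \<Rightarrow> complex mat \<Rightarrow> bool" where
  "unitary n U \<longleftrightarrow> U \<in> carrier_mat n n \<and> mat_adjoint U * U = 1\<^sub>m n"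

definition mat_fun :: "nat \<Rightarrow> (real \<Rightarrow> real) \<Rightarrow> complex mat \<Rightarrow> complex mat" where
  "mat_fun n f A =
     (let (U, d) = (SOME (U, d). unitary n U \<and>
                      A = U * mat_diag n (\<lambda>i. complex_of_real (d i)) * mat_adjoint U)
      in U * mat_diag n (\<lambda>i. complex_of_real (f (d i))) * mat_adjoint U)"

definition pinv_sqrt :: "nat \<Rightarrow> complex mat \<Rightarrow> complex mat" where
  "pinv_sqrt n A = mat_fun n (\<lambda>x. if x > 0 then 1 / sqrt x else 0) A"

definition trace_norm :: "nat \<Rightarrow> complex mat \<Rightarrow> real" where
  "trace_norm n X = Re (mtrace (mat_fun n sqrt (mat_adjoint X * X)))"

definition kron :: "complex mat \<Rightarrow> complex mat \<Rightarrow> complex mat" where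
  "kron A B = mat (dim_row A * dim_row B) (dim_col A * dim_col B)
     (\<lambda>(i,j). A $$ (i div dim_row B, j div dim_col B) * B $$ (i mod dim_row B, j mod dim_col B))"

definition ptrace_A :: "nat \<Rightarrow> nat \<Rightarrow> complex mat \<Rightarrow> complex mat" where
  "ptrace_A dA dB R = mat dB dB (\<lambda>(i,j). \<Sum>a<dA. R $$ (a*dB + i, a*dB + j))"

definition supp :: "nat \<Rightarrow> complex mat \<Rightarrow> complex vec set" where
  "supp n M = {M *\<^sub>v v | v. v \<in> carrier_vec n}"

definition Gamma_C :: "nat \<Rightarrow> nat \<Rightarrow> complex mat \<Rightarrow> complex mat \<Rightarrow> complex" where
  "Gamma_C dA dB R T =
     (let X = R * kron (1\<^sub>m dA) (pinv_sqrt dB T) in mtrace (X * X))"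

definition d_u :: "nat \<Rightarrow> nat \<Rightarrow> complex mat \<Rightarrow> real" where
  "d_u dA dB R = Inf {trace_norm (dA*dB) (R - kron ((1 / of_nat dA) \<cdot>\<^sub>m 1\<^sub>m dA) S) / 2 | S.
                       psd dB S \<and> mtrace S = mtrace (ptrace_A dA dB R)}"

end

theory Submission
  imports Defs "Jordan_Normal_Form.Spectral_Radius" "HOL-Analysis.L2_Norm"
begin

text \<open>Choose \<open>\<sigma>\<^sub>B = \<rho>\<^sub>B\<close>, so that \<open>d\<^sub>u(A|B)\<close> is at most half the trace norm of
  \<open>X = \<rho>\<^sub>A\<^sub>B - \<omega>\<^sub>A \<otimes> \<rho>\<^sub>B\<close>. Write \<open>\<parallel>X\<parallel>\<^sub>1 = tr (X S)\<close> with \<open>S\<close> the Hermitian unitary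
  sign of \<open>X\<close> and pass to an eigenbasis of \<open>1 \<otimes> \<tau>\<^sub>B\<close>, with eigenvalues \<open>t\<^sub>i\<close>. The support
  hypothesis makes the entries of \<open>X\<close> vanish on the kernel of \<open>1 \<otimes> \<tau>\<^sub>B\<close>, so weighting the
  entries of \<open>X\<close> by \<open>(t\<^sub>i t\<^sub>j)\<^sup>-\<^sup>1\<^sup>/\<^sup>4\<close> and those of \<open>S\<close> by \<open>(t\<^sub>i t\<^sub>j)\<^sup>1\<^sup>/\<^sup>4\<close>
  and applying Cauchy-Schwarz gives \<open>\<parallel>X\<parallel>\<^sub>1\<^sup>2 \<le> tr ((X D)\<^sup>2) \<cdot> tr (1 \<otimes> \<tau>\<^sub>B)\<close> with
  \<open>D = 1 \<otimes> \<tau>\<^sub>B\<^sup>-\<^sup>1\<^sup>/\<^sup>2\<close>; the second factor uses AM-GM and the unit row and column norms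
  of \<open>S\<close>. Finally \<open>tr (1 \<otimes> \<tau>\<^sub>B) = d\<^sub>A tr \<tau>\<^sub>B \<le> d\<^sub>A\<close>, and expanding the square
  together with \<open>tr (\<rho>\<^sub>A\<^sub>B (1 \<otimes> B)) = tr (\<rho>\<^sub>B B)\<close> gives
  \<open>d\<^sub>A tr ((X D)\<^sup>2) = d\<^sub>A \<Gamma>\<^sub>C(\<rho>\<^sub>A\<^sub>B|\<tau>\<^sub>B) - tr (\<rho>\<^sub>B \<tau>\<^sub>B\<^sup>-\<^sup>1\<^sup>/\<^sup>2 \<rho>\<^sub>B \<tau>\<^sub>B\<^sup>-\<^sup>1\<^sup>/\<^sup>2)\<close>.\<close>

lemma mat_adjoint_dim [simp]:
  "dim_row (mat_adjoint A) = dim_col A" "dim_col (mat_adjoint A) = dim_row A"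
  by (simp_all add: mat_adjoint_def)

lemma index_mat_adjoint [simp]:
  "i < dim_col A \<Longrightarrow> j < dim_row A \<Longrightarrow> mat_adjoint A $$ (i,j) = cnj (A $$ (j,i))"
  unfolding mat_adjoint_def by (subst mat_of_rows_index) auto

lemma mat_adjoint_carrier [simp]: "A \<in> carrier_mat n m \<Longrightarrow> mat_adjoint A \<in> carrier_mat m n"
  unfolding carrier_mat_def by simp

lemma mat_adjoint_adjoint [simp]: "mat_adjoint (mat_adjoint A) = (A :: complex mat)"
  by (rule eq_matI) auto

lemma index_mult_mat_sum:
  "A \<in> carrier_mat n k \<Longrightarrow> B \<in> carrier_mat k m \<Longrightarrow> i < n \<Longrightarrow> j < m \<Longrightarrow>
   (A * B) $$ (i,j) = (\<Sum>l<k. A $$ (i,l) * B $$ (l,j))"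
  by (auto simp: scalar_prod_def lessThan_atLeast0 intro!: sum.cong)

lemma index_adjoint_mult_sum:
  "U \<in> carrier_mat n m \<Longrightarrow> V \<in> carrier_mat n k \<Longrightarrow> i < m \<Longrightarrow> j < k \<Longrightarrow>
   (mat_adjoint U * V) $$ (i,j) = (\<Sum>l<n. cnj (U $$ (l,i)) * V $$ (l,j))"
  by (subst index_mult_mat_sum[of _ m n _ k]) (auto intro!: sum.cong)

lemma mat_adjoint_mult:
  assumes A: "A \<in> carrier_mat n k" and B: "B \<in> carrier_mat k m"
  shows "mat_adjoint (A * B) = mat_adjoint B * mat_adjoint (A :: complex mat)"
proof (rule eq_matI)
  fix i j assume "i < dim_row (mat_adjoint B * mat_adjoint A)" "j < dim_col (mat_adjoint B * mat_adjoint A)"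
  hence i: "i < m" and j: "j < n" using A B by auto
  have "mat_adjoint (A * B) $$ (i, j) = cnj ((A * B) $$ (j,i))" using A B i j by simp
  also have "\<dots> = (\<Sum>l<k. cnj (A $$ (j,l)) * cnj (B $$ (l,i)))"
    by (subst index_mult_mat_sum[OF A B j i]) (simp add: cnj_sum)
  also have "\<dots> = (mat_adjoint B * mat_adjoint A) $$ (i,j)"
    using A B i j by (subst index_mult_mat_sum[of _ m k _ n]) (auto simp: mult.commute intro!: sum.cong)
  finally show "mat_adjoint (A * B) $$ (i, j) = (mat_adjoint B * mat_adjoint A) $$ (i,j)" .
qed (use A B in auto)

lemma hermitian_index:
  "A \<in> carrier_mat n n \<Longrightarrow> hermitian A \<Longrightarrow> i < n \<Longrightarrow> j < n \<Longrightarrow> A $$ (i,j) = cnj (A $$ (j,i))"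
  unfolding hermitian_def by (metis index_mat_adjoint carrier_matD)

lemma hermitian_conj:
  assumes A: "A \<in> carrier_mat n n" and W: "W \<in> carrier_mat n m" and h: "hermitian A"
  shows "hermitian (mat_adjoint W * A * W)"
proof -
  have WA: "mat_adjoint W * A \<in> carrier_mat m n" using A W by (meson mat_adjoint_carrier mult_carrier_mat)
  have "mat_adjoint (mat_adjoint W * A * W) = mat_adjoint W * mat_adjoint (mat_adjoint W * A)"
    by (rule mat_adjoint_mult[OF WA W])
  also have "mat_adjoint (mat_adjoint W * A) = A * W"
    using h A W by (simp add: mat_adjoint_mult[of _ m n _ n] hermitian_def)
  finally show ?thesis
    using A W by (simp add: hermitian_def assoc_mult_mat[of _ m n _ n _ m])
qed

lemma mtrace_mult_comm:
  assumes A: "A \<in> carrier_mat n m" and B: "B \<in> carrier_mat m n"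
  shows "mtrace (A * B) = mtrace (B * A)"
proof -
  have "mtrace (A * B) = (\<Sum>i<n. \<Sum>l<m. A $$ (i,l) * B $$ (l,i))"
    unfolding mtrace_def using A B
    by (auto simp: index_mult_mat_sum[OF A B] simp del: index_mult_mat(1) intro!: sum.cong)
  also have "\<dots> = (\<Sum>l<m. \<Sum>i<n. B $$ (l,i) * A $$ (i,l))"
    by (subst sum.swap) (simp add: mult.commute)
  also have "\<dots> = mtrace (B * A)"
    unfolding mtrace_def using A B
    by (auto simp: index_mult_mat_sum[OF B A] simp del: index_mult_mat(1) intro!: sum.cong)
  finally show ?thesis .
qed

lemma mtrace_minus: "A \<in> carrier_mat n n \<Longrightarrow> B \<in> carrier_mat n n \<Longrightarrow> mtrace (A - B) = mtrace A - mtrace B"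
  unfolding mtrace_def by (auto simp: sum_subtractf)

lemma mtrace_smult: "A \<in> carrier_mat n n \<Longrightarrow> mtrace (c \<cdot>\<^sub>m A) = c * mtrace A"
  unfolding mtrace_def by (auto simp: sum_distrib_left)

lemma unitary_carrier: "unitary n U \<Longrightarrow> U \<in> carrier_mat n n"
  by (simp add: unitary_def)

lemma unitary_adjoint_mult: "unitary n U \<Longrightarrow> mat_adjoint U * U = 1\<^sub>m n"
  by (simp add: unitary_def)

lemma unitary_mult_adjoint: "unitary n U \<Longrightarrow> U * mat_adjoint U = 1\<^sub>m n"
  unfolding unitary_def using mat_mult_left_right_inverse[of "mat_adjoint U" n U] by auto

lemma unitary_adjoint: "unitary n U \<Longrightarrow> unitary n (mat_adjoint U)"
  unfolding unitary_def using unitary_mult_adjoint unfolding unitary_def by auto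

lemma unitary_cancel_left:
  assumes "unitary n U" "X \<in> carrier_mat n k"
  shows "mat_adjoint U * (U * X) = X"
proof -
  have "U \<in> carrier_mat n n" using assms(1) by (rule unitary_carrier)
  then have "mat_adjoint U * (U * X) = (mat_adjoint U * U) * X"
    using assms(2) by (simp add: assoc_mult_mat[of _ n n _ n _ k])
  then show ?thesis using assms by (simp add: unitary_adjoint_mult)
qed

lemma unitary_cancel_left':
  "unitary n U \<Longrightarrow> X \<in> carrier_mat n k \<Longrightarrow> U * (mat_adjoint U * X) = X"
  using unitary_cancel_left[OF unitary_adjoint] by simp

lemma unitary_mult:
  assumes U: "unitary n U" and V: "unitary n V"
  shows "unitary n (U * V)"
proof -
  have Uc: "U \<in> carrier_mat n n" and Vc: "V \<in> carrier_mat n n"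
    using U V by (simp_all add: unitary_carrier)
  have "mat_adjoint (U * V) * (U * V) = mat_adjoint V * (mat_adjoint U * (U * V))"
    using Uc Vc by (simp add: mat_adjoint_mult[OF Uc Vc] assoc_mult_mat[of _ n n _ n _ n])
  also have "\<dots> = 1\<^sub>m n"
    using U V Vc by (simp add: unitary_cancel_left unitary_adjoint_mult)
  finally show ?thesis using Uc Vc by (simp add: unitary_def)
qed

lemma mtrace_unitary_conj:
  assumes W: "unitary n W" and Y: "Y \<in> carrier_mat n n"
  shows "mtrace (mat_adjoint W * Y * W) = mtrace Y"
proof -
  have Wc: "W \<in> carrier_mat n n" using W by (rule unitary_carrier)
  have "mtrace (mat_adjoint W * Y * W) = mtrace (mat_adjoint W * (Y * W))"
    using Wc Y by (simp add: assoc_mult_mat[of _ n n _ n _ n])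
  also have "\<dots> = mtrace (Y * W * mat_adjoint W)"
    using Wc Y by (subst mtrace_mult_comm[of _ n n]) auto
  also have "\<dots> = mtrace Y"
    using W Wc Y by (simp add: assoc_mult_mat[of _ n n _ n _ n] unitary_mult_adjoint)
  finally show ?thesis .
qed

lemma mtrace_unitary_diag:
  assumes U: "unitary n U"
  shows "mtrace (U * mat_diag n f * mat_adjoint U) = (\<Sum>i<n. f i)"
proof -
  have "mtrace (U * mat_diag n f * mat_adjoint U) = mtrace (mat_diag n f)"
    using mtrace_unitary_conj[OF unitary_adjoint[OF U], of "mat_diag n f"] by simp
  also have "\<dots> = (\<Sum>i<n. f i)" by (simp add: mtrace_def mat_diag_def)
  finally show ?thesis .
qed

abbreviation real_diag :: "nat \<Rightarrow> (nat \<Rightarrow> real) \<Rightarrow> complex mat" where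
  "real_diag n d \<equiv> mat_diag n (\<lambda>i. complex_of_real (d i))"

lemma mat_adjoint_real_diag [simp]: "mat_adjoint (real_diag n d) = real_diag n d"
  by (rule eq_matI) (auto simp: mat_diag_def)

section \<open>Spectral theorem for Hermitian matrices\<close>

lemma cscalar_normalize_self:
  fixes w :: "complex vec"
  assumes "w \<in> carrier_vec n" "w \<noteq> 0\<^sub>v n"
  defines "c \<equiv> complex_of_real (1 / sqrt (Re (w \<bullet>c w)))"
  shows "c * cnj c * (w \<bullet>c w) = 1"
proof -
  define r where "r = Re (w \<bullet>c w)"
  have "w \<bullet>c w \<noteq> 0" using assms(1,2) conjugate_square_eq_0_vec by blast
  with conjugate_square_ge_0_vec[of w] have w: "w \<bullet>c w = complex_of_real r" and r: "r > 0"
    by (auto simp: r_def less_eq_complex_def complex_eq_iff)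
  have "c * cnj c * (w \<bullet>c w) = complex_of_real ((1 / sqrt r) * (1 / sqrt r) * r)"
    unfolding c_def w of_real_mult by (simp add: r_def)
  also have "(1 / sqrt r) * (1 / sqrt r) * r = 1"
    using r by (simp add: field_simps real_sqrt_mult[symmetric])
  finally show ?thesis by simp
qed

lemma corthogonal_normalize_unitary:
  assumes ws: "corthogonal ws" "set ws \<subseteq> carrier_vec n" "length ws = n"
  defines "W \<equiv> mat_of_cols n (map (\<lambda>w. complex_of_real (1 / sqrt (Re (w \<bullet>c w))) \<cdot>\<^sub>v w) ws)"
  shows "unitary n W"
proof -
  have wc: "ws ! i \<in> carrier_vec n" if "i < n" for i using ws that by auto
  have W: "W \<in> carrier_mat n n" unfolding W_def by (metis mat_of_cols_carrier(1) length_map ws(3))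
  have "mat_adjoint W * W = 1\<^sub>m n"
  proof (rule eq_matI)
    fix i j assume "i < dim_row (1\<^sub>m n)" "j < dim_col (1\<^sub>m n)"
    hence i: "i < n" and j: "j < n" by auto
    define c where "c k = complex_of_real (1 / sqrt (Re (ws ! k \<bullet>c ws ! k)))" for k
    have "(mat_adjoint W * W) $$ (i,j) = (\<Sum>l<n. cnj (W $$ (l,i)) * W $$ (l,j))"
      by (rule index_adjoint_mult_sum[OF W W i j])
    also have "\<dots> = (\<Sum>l<n. c j * cnj (c i) * (ws ! j $ l * cnj (ws ! i $ l)))"
      using i j wc[OF i] wc[OF j] ws(3)
      by (intro sum.cong refl) (simp add: W_def c_def mat_of_cols_index ac_simps)
    also have "\<dots> = c j * cnj (c i) * (ws ! j \<bullet>c ws ! i)"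
      using wc[OF i] by (simp add: scalar_prod_def lessThan_atLeast0 sum_distrib_left)
    also have "\<dots> = 1\<^sub>m n $$ (i,j)"
    proof (cases "i = j")
      case True
      have "ws ! i \<noteq> 0\<^sub>v n" using corthogonalD[OF ws(1), of i i] i ws(3) by auto
      then have "c i * cnj (c i) * (ws ! i \<bullet>c ws ! i) = 1"
        unfolding c_def by (rule cscalar_normalize_self[OF wc[OF i]])
      then show ?thesis using True i by simp
    next
      case False
      then have "ws ! j \<bullet>c ws ! i = 0" using corthogonalD[OF ws(1), of j i] i j ws(3) by auto
      then show ?thesis using False i j by simp
    qed
    finally show "(mat_adjoint W * W) $$ (i,j) = 1\<^sub>m n $$ (i,j)" .
  qed (use W in auto)
  then show ?thesis using W by (simp add: unitary_def)
qed

lemma eigenvector_unitary_first_col: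
  assumes A: "A \<in> carrier_mat n n" and ev: "eigenvector A v e"
  shows "\<exists>W. unitary n W \<and> A *\<^sub>v col W 0 = e \<cdot>\<^sub>v col W 0"
proof -
  from ev A have v: "v \<in> carrier_vec n" "v \<noteq> 0\<^sub>v n" and Av: "A *\<^sub>v v = e \<cdot>\<^sub>v v"
    unfolding eigenvector_def by auto
  interpret cof_vec_space n "TYPE(complex)" .
  define b where "b = basis_completion v"
  from basis_completion[OF v, folded b_def]
  have b: "set b \<subseteq> carrier_vec n" "distinct b" "\<not> lin_dep (set b)" "length b = n" "hd b = v"
    by auto
  then obtain vs where bv: "b = v # vs" using v by (cases b) auto
  define ws where "ws = gram_schmidt n b"
  from gram_schmidt_result[OF b(1-3) ws_def]
  have ws: "corthogonal ws" "set ws \<subseteq> carrier_vec n" "length ws = n" using b(4) by auto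
  have n0: "0 < n" using ws(3) b(4) bv by auto
  have "hd ws = v" unfolding ws_def bv by (rule gram_schmidt_hd[OF v(1)])
  then have ws0: "ws ! 0 = v" using n0 ws(3) by (metis hd_conv_nth list.size(3) less_irrefl)
  define c where "c = complex_of_real (1 / sqrt (Re (v \<bullet>c v)))"
  define W where "W = mat_of_cols n (map (\<lambda>w. complex_of_real (1 / sqrt (Re (w \<bullet>c w))) \<cdot>\<^sub>v w) ws)"
  have "col W 0 = c \<cdot>\<^sub>v v"
    using n0 ws(3) ws0 v(1) by (simp add: W_def c_def)
  then have "A *\<^sub>v col W 0 = e \<cdot>\<^sub>v col W 0"
    using A v(1) Av by (simp add: mult_mat_vec smult_smult_assoc mult.commute)
  then show ?thesis using corthogonal_normalize_unitary[OF ws, folded W_def] by blast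
qed

lemma unitary_conj_eigen_first_col:
  assumes A: "A \<in> carrier_mat n n" and h: "hermitian A" and W: "unitary n W"
    and Aw: "A *\<^sub>v col W 0 = e \<cdot>\<^sub>v col W 0" and n0: "0 < n"
  defines "A' \<equiv> mat_adjoint W * A * W"
  shows "Im e = 0"
    and "\<And>i. i < n \<Longrightarrow> A' $$ (i,0) = (if i = 0 then e else 0)"
    and "\<And>j. j < n \<Longrightarrow> A' $$ (0,j) = (if j = 0 then e else 0)"
proof -
  have Wc: "W \<in> carrier_mat n n" using W by (rule unitary_carrier)
  have A'c: "A' \<in> carrier_mat n n"
    unfolding A'_def using A Wc by (meson mat_adjoint_carrier mult_carrier_mat)
  have hA': "hermitian A'" unfolding A'_def by (rule hermitian_conj[OF A Wc h])
  have col0: "A' $$ (i,0) = (if i = 0 then e else 0)" if i: "i < n" for i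
  proof -
    have "col (A * W) 0 = e \<cdot>\<^sub>v col W 0" by (simp only: col_mult2[OF A Wc n0] Aw)
    then have "col (mat_adjoint W * (A * W)) 0 = e \<cdot>\<^sub>v col (mat_adjoint W * W) 0"
      using A Wc n0 by (simp add: col_mult2[of _ n n _ n] mult_mat_vec[of _ n n])
    then have "col A' 0 = e \<cdot>\<^sub>v col (1\<^sub>m n) 0"
      using A Wc W by (simp add: A'_def assoc_mult_mat[of _ n n _ n _ n] unitary_adjoint_mult)
    then have "col A' 0 $ i = (e \<cdot>\<^sub>v col (1\<^sub>m n) 0) $ i" by simp
    then show ?thesis using i n0 A'c by simp
  qed
  have e: "e = cnj e" using hermitian_index[OF A'c hA' n0 n0] col0[OF n0] by simp
  then show "Im e = 0" by (metis cnj.sel(2) neg_equal_zero)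
  show "A' $$ (i,0) = (if i = 0 then e else 0)" if "i < n" for i using col0 that .
  show "A' $$ (0,j) = (if j = 0 then e else 0)" if j: "j < n" for j
    using hermitian_index[OF A'c hA' n0 j] col0[OF j] e by auto
qed

definition scalar_dsum :: "complex \<Rightarrow> complex mat \<Rightarrow> complex mat" where
  "scalar_dsum a B = mat (Suc (dim_row B)) (Suc (dim_col B))
     (\<lambda>(i,j). if i = 0 \<and> j = 0 then a else if i = 0 \<or> j = 0 then 0 else B $$ (i - 1, j - 1))"

lemma scalar_dsum_carrier [simp]: "B \<in> carrier_mat n m \<Longrightarrow> scalar_dsum a B \<in> carrier_mat (Suc n) (Suc m)"
  by (auto simp: scalar_dsum_def)

lemma index_scalar_dsum:
  "B \<in> carrier_mat n m \<Longrightarrow> i < Suc n \<Longrightarrow> j < Suc m \<Longrightarrow> scalar_dsum a B $$ (i,j) =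
     (if i = 0 \<and> j = 0 then a else if i = 0 \<or> j = 0 then 0 else B $$ (i - 1, j - 1))"
  by (auto simp: scalar_dsum_def)

lemma scalar_dsum_mult:
  assumes A: "A \<in> carrier_mat n k" and B: "B \<in> carrier_mat k m"
  shows "scalar_dsum a A * scalar_dsum b B = scalar_dsum (a * b) (A * B)"
proof (rule eq_matI)
  fix i j assume "i < dim_row (scalar_dsum (a * b) (A * B))" "j < dim_col (scalar_dsum (a * b) (A * B))"
  then have i: "i < Suc n" and j: "j < Suc m" using A B by (auto simp: scalar_dsum_def)
  have "(scalar_dsum a A * scalar_dsum b B) $$ (i,j) =
      (\<Sum>l<Suc k. scalar_dsum a A $$ (i,l) * scalar_dsum b B $$ (l,j))"
    by (rule index_mult_mat_sum[OF scalar_dsum_carrier[OF A] scalar_dsum_carrier[OF B] i j])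
  also have "\<dots> = scalar_dsum a A $$ (i,0) * scalar_dsum b B $$ (0,j) +
      (\<Sum>l<k. scalar_dsum a A $$ (i, Suc l) * scalar_dsum b B $$ (Suc l, j))"
    by (subst sum.lessThan_Suc_shift) simp
  also have "\<dots> = scalar_dsum (a * b) (A * B) $$ (i,j)"
    using A B i j
    by (cases i; cases j)
      (auto simp: index_scalar_dsum index_scalar_dsum[OF mult_carrier_mat[OF A B]]
        index_mult_mat_sum[OF A B] simp del: index_mult_mat(1))
  finally show "(scalar_dsum a A * scalar_dsum b B) $$ (i,j) = scalar_dsum (a * b) (A * B) $$ (i,j)" .
qed (use A B in \<open>auto simp: scalar_dsum_def\<close>)

lemma mat_adjoint_scalar_dsum: "mat_adjoint (scalar_dsum a B) = scalar_dsum (cnj a) (mat_adjoint B)"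
  by (rule eq_matI) (auto simp: scalar_dsum_def)

lemma scalar_dsum_one: "scalar_dsum 1 (1\<^sub>m n) = 1\<^sub>m (Suc n)"
  by (rule eq_matI) (auto simp: scalar_dsum_def)

lemma scalar_dsum_real_diag:
  "scalar_dsum (complex_of_real x) (real_diag n d) = real_diag (Suc n) (\<lambda>i. if i = 0 then x else d (i - 1))"
  by (rule eq_matI) (auto simp: scalar_dsum_def mat_diag_def)

lemma unitary_scalar_dsum: "unitary n U \<Longrightarrow> unitary (Suc n) (scalar_dsum 1 U)"
  by (simp add: unitary_def mat_adjoint_scalar_dsum scalar_dsum_mult[of _ n n _ n] scalar_dsum_one)

lemma hermitian_unitary_deflation:
  assumes A: "A \<in> carrier_mat (Suc m) (Suc m)" and h: "hermitian A"
  obtains W e B where "unitary (Suc m) W" "B \<in> carrier_mat m m" "hermitian B"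
    "mat_adjoint W * A * W = scalar_dsum (complex_of_real e) B"
proof -
  from spectrum_non_empty[OF A] obtain e v where "eigenvector A v e"
    unfolding spectrum_def eigenvalue_def by auto
  with eigenvector_unitary_first_col[OF A] obtain W
    where W: "unitary (Suc m) W" and Aw: "A *\<^sub>v col W 0 = e \<cdot>\<^sub>v col W 0" by blast
  define A' where "A' = mat_adjoint W * A * W"
  have A'c: "A' \<in> carrier_mat (Suc m) (Suc m)"
    unfolding A'_def using A unitary_carrier[OF W] by (meson mat_adjoint_carrier mult_carrier_mat)
  have hA': "hermitian A'" unfolding A'_def by (rule hermitian_conj[OF A unitary_carrier[OF W] h])
  note first = unitary_conj_eigen_first_col[OF A h W Aw zero_less_Suc, folded A'_def]
  define B where "B = mat m m (\<lambda>(i,j). A' $$ (Suc i, Suc j))"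
  have "hermitian B"
    unfolding hermitian_def
  proof (rule eq_matI)
    fix i j assume "i < dim_row B" "j < dim_col B"
    then show "mat_adjoint B $$ (i,j) = B $$ (i,j)"
      using hermitian_index[OF A'c hA', of "Suc j" "Suc i"] by (simp add: B_def)
  qed (simp_all add: B_def)
  moreover have "e = complex_of_real (Re e)" using first(1) by (simp add: complex_eq_iff)
  then have "A' = scalar_dsum (complex_of_real (Re e)) B"
    using A'c first(2,3) by (intro eq_matI) (auto simp: scalar_dsum_def B_def)
  moreover have "B \<in> carrier_mat m m" by (simp add: B_def)
  ultimately show ?thesis using that[OF W] by (simp add: A'_def)
qed

lemma scalar_dsum_unitary_diag:
  assumes U: "U \<in> carrier_mat m m"
  shows "scalar_dsum (complex_of_real x) (U * real_diag m d * mat_adjoint U) =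
    scalar_dsum 1 U * real_diag (Suc m) (\<lambda>i. if i = 0 then x else d (i - 1)) * mat_adjoint (scalar_dsum 1 U)"
  using U by (simp add: mat_adjoint_scalar_dsum scalar_dsum_mult[of _ m m _ m] scalar_dsum_real_diag[symmetric])

lemma unitary_conj_inverse:
  assumes W: "unitary n W" and A: "A \<in> carrier_mat n n"
  shows "W * (mat_adjoint W * A * W) * mat_adjoint W = A"
proof -
  have Wc: "W \<in> carrier_mat n n" using W by (rule unitary_carrier)
  have "W * (mat_adjoint W * A * W) * mat_adjoint W = W * (mat_adjoint W * (A * (W * mat_adjoint W)))"
    using Wc A by (simp add: assoc_mult_mat[of _ n n _ n _ n] mult_carrier_mat[of _ n n _ n])
  also have "\<dots> = A" using W A by (simp add: unitary_mult_adjoint unitary_cancel_left')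
  finally show ?thesis .
qed

lemma conj_mult_conj:
  fixes W S D :: "complex mat"
  assumes "W \<in> carrier_mat n n" "S \<in> carrier_mat n n" "D \<in> carrier_mat n n"
  shows "W * (S * D * mat_adjoint S) * mat_adjoint W = (W * S) * D * mat_adjoint (W * S)"
  using assms by (simp add: mat_adjoint_mult[OF assms(1,2)] assoc_mult_mat[of _ n n _ n _ n]
      mult_carrier_mat[of _ n n _ n])

theorem hermitian_spectral:
  assumes "A \<in> carrier_mat n n" "hermitian A"
  shows "\<exists>U d. unitary n U \<and> A = U * real_diag n d * mat_adjoint U"
  using assms
proof (induction n arbitrary: A)
  case 0
  show ?case
  proof (intro exI conjI)
    show "unitary 0 (1\<^sub>m 0)" by (auto simp: unitary_def intro!: eq_matI)
    show "A = 1\<^sub>m 0 * real_diag 0 (\<lambda>_. 0) * mat_adjoint (1\<^sub>m 0)"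
      using 0 by (intro eq_matI) auto
  qed
next
  case (Suc m A)
  obtain W e B where W: "unitary (Suc m) W" and B: "B \<in> carrier_mat m m" "hermitian B"
    and A': "mat_adjoint W * A * W = scalar_dsum (complex_of_real e) B"
    using hermitian_unitary_deflation[OF Suc.prems] by blast
  obtain U d where U: "unitary m U" and Beq: "B = U * real_diag m d * mat_adjoint U"
    using Suc.IH[OF B] by blast
  define d' where "d' i = (if i = 0 then e else d (i - 1))" for i
  have "A = W * (scalar_dsum 1 U * real_diag (Suc m) d' * mat_adjoint (scalar_dsum 1 U)) * mat_adjoint W"
    using unitary_conj_inverse[OF W Suc.prems(1)]
    by (simp add: A' Beq d'_def scalar_dsum_unitary_diag[OF unitary_carrier[OF U]])
  also have "\<dots> = (W * scalar_dsum 1 U) * real_diag (Suc m) d' * mat_adjoint (W * scalar_dsum 1 U)"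
    by (rule conj_mult_conj[OF unitary_carrier[OF W] scalar_dsum_carrier[OF unitary_carrier[OF U]] mat_diag_dim])
  finally show ?case using unitary_mult[OF W unitary_scalar_dsum[OF U]] by blast
qed

section \<open>Functional calculus and the trace norm\<close>

lemma dim_mat_diag [simp]: "dim_row (mat_diag n f) = n" "dim_col (mat_diag n f) = n"
  by (simp_all add: mat_diag_def)

lemma mat_diag_commute_fun:
  fixes C :: "complex mat"
  assumes C: "C \<in> carrier_mat n n"
    and eq: "real_diag n d * C = C * real_diag n e"
  shows "real_diag n (f \<circ> d) * C = C * real_diag n (f \<circ> e)"
proof (rule eq_matI)
  fix i j assume "i < dim_row (C * real_diag n (f \<circ> e))" "j < dim_col (C * real_diag n (f \<circ> e))"
  hence i: "i < n" and j: "j < n" using C by auto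
  have "(real_diag n d * C) $$ (i,j) = (C * real_diag n e) $$ (i,j)" using eq by (simp only:)
  hence "complex_of_real (d i) * C $$ (i,j) = C $$ (i,j) * complex_of_real (e j)"
    unfolding mat_diag_mult_left[OF C] mat_diag_mult_right[OF C] using i j by simp
  hence "C $$ (i,j) = 0 \<or> d i = e j" by (auto simp: mult.commute)
  hence "complex_of_real (f (d i)) * C $$ (i,j) = C $$ (i,j) * complex_of_real (f (e j))" by auto
  thus "(real_diag n (f \<circ> d) * C) $$ (i,j) = (C * real_diag n (f \<circ> e)) $$ (i,j)"
    unfolding mat_diag_mult_left[OF C] mat_diag_mult_right[OF C] using i j by simp
qed (use C in auto)

lemma unitary_diag_fun_eq:
  assumes U: "unitary n U" and V: "unitary n V"
    and eq: "U * real_diag n d * mat_adjoint U = V * real_diag n e * mat_adjoint V"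
  shows "U * real_diag n (f \<circ> d) * mat_adjoint U = V * real_diag n (f \<circ> e) * mat_adjoint V"
proof -
  note as = assoc_mult_mat[of _ n n _ n _ n] and mc = mult_carrier_mat[of _ n n _ n]
  note cancel = unitary_cancel_left[OF U, where k=n] unitary_cancel_left[OF V, where k=n]
    unitary_cancel_left'[OF U, where k=n] unitary_cancel_left'[OF V, where k=n]
    unitary_adjoint_mult[OF U] unitary_adjoint_mult[OF V] unitary_mult_adjoint[OF U]
    unitary_mult_adjoint[OF V] right_mult_one_mat[of _ n n]
  have Uc: "U \<in> carrier_mat n n" and UA: "mat_adjoint U \<in> carrier_mat n n"
   and Vc: "V \<in> carrier_mat n n" and VA: "mat_adjoint V \<in> carrier_mat n n"
    using U V by (auto simp: unitary_def)
  define C where "C = mat_adjoint U * V"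
  have Cc: "C \<in> carrier_mat n n" using UA Vc by (simp add: C_def mc)
  have "real_diag n d * C = mat_adjoint U * (U * real_diag n d * mat_adjoint U) * V"
    unfolding C_def using Uc UA Vc VA by (simp add: as mc cancel)
  also have "\<dots> = mat_adjoint U * (V * real_diag n e * mat_adjoint V) * V" by (simp add: eq)
  also have "\<dots> = C * real_diag n e"
    unfolding C_def using Uc UA Vc VA by (simp add: as mc cancel)
  finally have "real_diag n d * C = C * real_diag n e" .
  from mat_diag_commute_fun[OF Cc this, of f]
  have com: "real_diag n (f \<circ> d) * C = C * real_diag n (f \<circ> e)" .
  have "U * real_diag n (f \<circ> d) * mat_adjoint U = U * (real_diag n (f \<circ> d) * C) * mat_adjoint V"
    unfolding C_def using Uc UA Vc VA by (simp add: as mc cancel)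
  also have "\<dots> = U * (C * real_diag n (f \<circ> e)) * mat_adjoint V" unfolding com ..
  also have "\<dots> = V * real_diag n (f \<circ> e) * mat_adjoint V"
    unfolding C_def using Uc UA Vc VA by (simp add: as mc cancel)
  finally show ?thesis .
qed

lemma mat_fun_unitary_diag:
  assumes U: "unitary n U" and A: "A = U * real_diag n d * mat_adjoint U"
  shows "mat_fun n f A = U * real_diag n (f \<circ> d) * mat_adjoint U"
proof -
  define Q where "Q = (\<lambda>U d. unitary n U \<and> A = U * real_diag n d * mat_adjoint U)"
  have ex: "(\<lambda>p. case p of (U, d) \<Rightarrow> Q U d) (U, d)" using U A by (simp add: Q_def)
  define p where "p = (SOME p. case p of (U, d) \<Rightarrow> Q U d)"
  have "case p of (U, d) \<Rightarrow> Q U d" unfolding p_def by (rule someI[of _ "(U,d)"]) (use ex in simp)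
  then obtain U' d' where p: "p = (U', d')" and Q: "Q U' d'" by (cases p) auto
  have mf: "mat_fun n f A = U' * real_diag n (f \<circ> d') * mat_adjoint U'"
    unfolding mat_fun_def using p unfolding p_def Q_def by (simp add: comp_def)
  have U': "unitary n U'" using Q by (simp add: Q_def)
  have "U' * real_diag n d' * mat_adjoint U' = U * real_diag n d * mat_adjoint U" using Q A by (simp add: Q_def)
  from unitary_diag_fun_eq[OF U' U this, of f] mf show ?thesis by simp
qed

lemma unitary_adjoint_conj_inverse:
  "unitary n W \<Longrightarrow> A \<in> carrier_mat n n \<Longrightarrow> mat_adjoint W * (W * A * mat_adjoint W) * W = A"
  using unitary_conj_inverse[OF unitary_adjoint] by simp

lemma unitary_conj_mult:
  assumes W: "unitary n W" and A: "A \<in> carrier_mat n n" and B: "B \<in> carrier_mat n n"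
  shows "(W * A * mat_adjoint W) * (W * B * mat_adjoint W) = W * (A * B) * mat_adjoint W"
proof -
  have Wc: "W \<in> carrier_mat n n" using W by (rule unitary_carrier)
  have "(W * A * mat_adjoint W) * (W * B * mat_adjoint W) = W * (A * ((mat_adjoint W * W) * (B * mat_adjoint W)))"
    using Wc A B by (simp add: assoc_mult_mat[of _ n n _ n _ n] mult_carrier_mat[of _ n n _ n])
  also have "\<dots> = W * (A * B) * mat_adjoint W"
    using W Wc A B by (simp add: unitary_adjoint_mult assoc_mult_mat[of _ n n _ n _ n] mult_carrier_mat[of _ n n _ n])
  finally show ?thesis .
qed

lemma hermitian_unitary_diag:
  "V \<in> carrier_mat n n \<Longrightarrow> hermitian (V * real_diag n d * mat_adjoint V)"
  using hermitian_conj[of "real_diag n d" n "mat_adjoint V" n] by (simp add: hermitian_def)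

lemma index_adjoint_mult_self:
  assumes "A \<in> carrier_mat n m" "i < m"
  shows "(mat_adjoint A * A) $$ (i,i) = complex_of_real (\<Sum>k<n. (cmod (A $$ (k,i)))\<^sup>2)"
proof -
  have "(mat_adjoint A * A) $$ (i,i) = (\<Sum>k<n. cnj (A $$ (k,i)) * A $$ (k,i))"
    by (rule index_adjoint_mult_sum[OF assms(1,1,2,2)])
  also have "\<dots> = (\<Sum>k<n. complex_of_real ((cmod (A $$ (k,i)))\<^sup>2))"
    by (rule sum.cong[OF refl]) (subst complex_norm_square, simp add: mult.commute)
  finally show ?thesis by simp
qed

lemma trace_norm_unitary_diag:
  assumes V: "unitary n V" and X: "X = V * real_diag n l * mat_adjoint V"
  shows "trace_norm n X = (\<Sum>i<n. \<bar>l i\<bar>)"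
proof -
  have "mat_adjoint X * X = V * real_diag n (\<lambda>i. l i * l i) * mat_adjoint V"
    using hermitian_unitary_diag[OF unitary_carrier[OF V], of l]
    by (simp add: X hermitian_def unitary_conj_mult[OF V])
  then have "mat_fun n sqrt (mat_adjoint X * X) = V * real_diag n (sqrt \<circ> (\<lambda>i. l i * l i)) * mat_adjoint V"
    by (rule mat_fun_unitary_diag[OF V])
  then show ?thesis
    by (simp add: trace_norm_def mtrace_unitary_diag[OF V])
qed

lemma trace_norm_nonneg:
  assumes Y: "Y \<in> carrier_mat n n"
  shows "trace_norm n Y \<ge> 0"
proof -
  have M: "mat_adjoint Y * Y \<in> carrier_mat n n" using Y by (simp add: mult_carrier_mat[of _ n n _ n])
  have "hermitian (mat_adjoint Y * Y)"
    using Y by (simp add: hermitian_def mat_adjoint_mult[of _ n n _ n])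
  from hermitian_spectral[OF M this] obtain V m
    where V: "unitary n V" and eq: "mat_adjoint Y * Y = V * real_diag n m * mat_adjoint V" by blast
  have Vc: "V \<in> carrier_mat n n" using V by (rule unitary_carrier)
  have "m i \<ge> 0" if i: "i < n" for i
  proof -
    have "real_diag n m = mat_adjoint V * (mat_adjoint Y * Y) * V"
      using unitary_adjoint_conj_inverse[OF V, of "real_diag n m"] by (simp add: eq)
    also have "\<dots> = mat_adjoint (Y * V) * (Y * V)"
      using Y Vc by (simp add: mat_adjoint_mult[of _ n n _ n] assoc_mult_mat[of _ n n _ n _ n]
          mult_carrier_mat[of _ n n _ n])
    finally have diag: "real_diag n m = mat_adjoint (Y * V) * (Y * V)" .
    have "complex_of_real (m i) = (mat_adjoint (Y * V) * (Y * V)) $$ (i,i)"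
      unfolding diag[symmetric] using i by (simp add: mat_diag_def)
    also have "\<dots> = complex_of_real (\<Sum>k<n. (cmod ((Y * V) $$ (k,i)))\<^sup>2)"
      using Y Vc i by (intro index_adjoint_mult_self) (auto simp: mult_carrier_mat[of _ n n _ n])
    finally have "m i = (\<Sum>k<n. (cmod ((Y * V) $$ (k,i)))\<^sup>2)" by (simp only: of_real_eq_iff)
    then show ?thesis by (simp add: sum_nonneg)
  qed
  moreover have "mat_fun n sqrt (mat_adjoint Y * Y) = V * real_diag n (sqrt \<circ> m) * mat_adjoint V"
    by (rule mat_fun_unitary_diag[OF V eq])
  then have "trace_norm n Y = (\<Sum>i<n. sqrt (m i))"
    by (simp add: trace_norm_def mtrace_unitary_diag[OF V])
  ultimately show ?thesis by (auto intro!: sum_nonneg)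
qed

lemma trace_norm_eq_mtrace_sign:
  assumes X: "X \<in> carrier_mat n n" and h: "hermitian X"
  obtains S where "S \<in> carrier_mat n n" "hermitian S" "unitary n S" "Re (mtrace (X * S)) = trace_norm n X"
proof -
  obtain V l where V: "unitary n V" and Xeq: "X = V * real_diag n l * mat_adjoint V"
    using hermitian_spectral[OF X h] by blast
  have Vc: "V \<in> carrier_mat n n" using V by (rule unitary_carrier)
  define s :: "nat \<Rightarrow> real" where "s i = (if l i \<ge> 0 then 1 else -1)" for i
  define S where "S = V * real_diag n s * mat_adjoint V"
  have Sc: "S \<in> carrier_mat n n" using Vc by (simp add: S_def mult_carrier_mat[of _ n n _ n])
  have hS: "hermitian S" unfolding S_def by (rule hermitian_unitary_diag[OF Vc])
  have "mat_adjoint S * S = V * real_diag n (\<lambda>i. s i * s i) * mat_adjoint V"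
    using hS by (simp add: S_def hermitian_def unitary_conj_mult[OF V])
  also have "real_diag n (\<lambda>i. s i * s i) = 1\<^sub>m n" by (rule eq_matI) (auto simp: s_def mat_diag_def)
  finally have "unitary n S" using Sc V Vc by (simp add: unitary_def unitary_mult_adjoint)
  moreover have "X * S = V * real_diag n (\<lambda>i. l i * s i) * mat_adjoint V"
    by (simp add: Xeq S_def unitary_conj_mult[OF V])
  then have "Re (mtrace (X * S)) = (\<Sum>i<n. \<bar>l i\<bar>)"
    by (simp add: mtrace_unitary_diag[OF V], intro sum.cong) (auto simp: s_def)
  ultimately show ?thesis using that Sc hS trace_norm_unitary_diag[OF V Xeq] by simp
qed

section \<open>Tensoring with the identity and the partial trace\<close>

lemma sum_lessThan_mult:
  fixes g :: "nat \<Rightarrow> 'a::comm_monoid_add"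
  shows "(\<Sum>k<dA * dB. g k) = (\<Sum>a<dA. \<Sum>c<dB. g (a * dB + c))"
proof -
  have "(\<Sum>k\<in>{a * dB..<a * dB + dB}. g k) = (\<Sum>c<dB. g (a * dB + c))" for a
    using sum.shift_bounds_nat_ivl[of g 0 "a * dB" dB] by (simp add: atLeast0LessThan add.commute)
  then show ?thesis using sum.nat_group[of g dB dA] by simp
qed

lemma sum_lessThan_mult_div_mod:
  fixes g :: "nat \<Rightarrow> nat \<Rightarrow> 'a::comm_monoid_add"
  shows "(\<Sum>k<dA * dB. g (k div dB) (k mod dB)) = (\<Sum>a<dA. \<Sum>c<dB. g a c)"
  by (subst sum_lessThan_mult) (intro sum.cong refl, simp)

lemma div_less_of_less_mult: "i < dA * dB \<Longrightarrow> i div dB < (dA::nat)"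
  by (simp add: less_mult_imp_div_less)

lemma mod_less_of_less_mult: "i < dA * dB \<Longrightarrow> i mod dB < (dB::nat)"
  by (metis mod_less_divisor mult_0_right neq0_conv not_less0)

lemma mult_delta_right: "(x::complex) * (if P then y else 0) = (if P then x * y else 0)" by simp
lemma mult_delta_left: "(if P then y else 0) * (x::complex) = (if P then y * x else 0)" by simp
lemma sum_if_const: "(\<Sum>c\<in>A. if P then F c else (0::complex)) = (if P then sum F A else 0)" by auto

lemmas delta_simps = mult_delta_right mult_delta_left sum_if_const sum.delta sum.delta'

lemma mult_add_less_mult [simp]: "a < dA \<Longrightarrow> c < dB \<Longrightarrow> a * dB + c < dA * (dB::nat)"
proof -
  assume a: "a < dA" and c: "c < dB"
  have "a * dB + c < a * dB + dB" using c by simp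
  also have "\<dots> = Suc a * dB" by simp
  also have "\<dots> \<le> dA * dB" using a by (intro mult_right_mono) auto
  finally show ?thesis .
qed

lemma kron_one_carrier[simp]: "M \<in> carrier_mat dB dB \<Longrightarrow> kron (1\<^sub>m dA) M \<in> carrier_mat (dA*dB) (dA*dB)"
proof -
  assume M: "M \<in> carrier_mat dB dB"
  hence "dim_row M = dB" "dim_col M = dB" by auto
  thus ?thesis by (simp add: kron_def)
qed

lemma index_kron_one: "M \<in> carrier_mat dB dB \<Longrightarrow> i < dA*dB \<Longrightarrow> j < dA*dB \<Longrightarrow>
   kron (1\<^sub>m dA) M $$ (i,j) = (if i div dB = j div dB then M $$ (i mod dB, j mod dB) else 0)"
proof -
  assume M: "M \<in> carrier_mat dB dB" and i: "i < dA*dB" and j: "j < dA*dB"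
  hence d: "dim_row M = dB" "dim_col M = dB" by auto
  show ?thesis using div_less_of_less_mult[OF i] div_less_of_less_mult[OF j] i j by (simp add: kron_def d)
qed

lemma kron_one_mult: assumes A: "A \<in> carrier_mat dB dB" and B: "B \<in> carrier_mat dB dB"
  shows "kron (1\<^sub>m dA) A * kron (1\<^sub>m dA) B = kron (1\<^sub>m dA) (A * B)"
proof (rule eq_matI)
  fix i j assume "i < dim_row (kron (1\<^sub>m dA) (A * B))" "j < dim_col (kron (1\<^sub>m dA) (A * B))"
  hence i: "i < dA*dB" and j: "j < dA*dB" using A B by (auto simp: kron_def)
  have AB: "A * B \<in> carrier_mat dB dB" using A B by simp
  have "(kron (1\<^sub>m dA) A * kron (1\<^sub>m dA) B) $$ (i,j) =
     (\<Sum>k<dA*dB. kron (1\<^sub>m dA) A $$ (i,k) * kron (1\<^sub>m dA) B $$ (k,j))"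
    by (rule index_mult_mat_sum[OF kron_one_carrier[OF A] kron_one_carrier[OF B] i j])
  also have "\<dots> = (\<Sum>k<dA*dB. (if i div dB = k div dB then A $$ (i mod dB, k mod dB) else 0) *
       (if k div dB = j div dB then B $$ (k mod dB, j mod dB) else 0))"
    by (rule sum.cong[OF refl]) (use i j A B in \<open>simp add: index_kron_one\<close>)
  also have "\<dots> = (\<Sum>a<dA. \<Sum>c<dB. (if i div dB = a then A $$ (i mod dB, c) else 0) *
       (if a = j div dB then B $$ (c, j mod dB) else 0))"
    by (rule sum_lessThan_mult_div_mod)
  also have "\<dots> = (if i div dB = j div dB then (\<Sum>c<dB. A $$ (i mod dB, c) * B $$ (c, j mod dB)) else 0)"
    using div_less_of_less_mult[OF i] by (simp add: delta_simps)
  also have "\<dots> = kron (1\<^sub>m dA) (A * B) $$ (i,j)"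
    using i j mod_less_of_less_mult[OF i] mod_less_of_less_mult[OF j]
    by (simp add: index_kron_one[OF AB] index_mult_mat_sum[OF A B])
  finally show "(kron (1\<^sub>m dA) A * kron (1\<^sub>m dA) B) $$ (i,j) = kron (1\<^sub>m dA) (A * B) $$ (i,j)" .
qed (use A B in \<open>auto simp: kron_def\<close>)

lemma mat_adjoint_kron_one: assumes M: "M \<in> carrier_mat dB dB"
  shows "mat_adjoint (kron (1\<^sub>m dA) M) = kron (1\<^sub>m dA) (mat_adjoint M)"
proof (rule eq_matI)
  have MA: "mat_adjoint M \<in> carrier_mat dB dB" using M by simp
  fix i j assume "i < dim_row (kron (1\<^sub>m dA) (mat_adjoint M))" "j < dim_col (kron (1\<^sub>m dA) (mat_adjoint M))"
  hence i: "i < dA*dB" and j: "j < dA*dB" using kron_one_carrier[OF MA, of dA] by auto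
  show "mat_adjoint (kron (1\<^sub>m dA) M) $$ (i,j) = kron (1\<^sub>m dA) (mat_adjoint M) $$ (i,j)"
    using carrier_matD[OF kron_one_carrier[OF M, of dA]] i j M mod_less_of_less_mult[OF i] mod_less_of_less_mult[OF j]
    by (auto simp: index_kron_one[OF M] index_kron_one[OF MA])
qed (use kron_one_carrier[OF M, of dA] kron_one_carrier[OF mat_adjoint_carrier[OF M], of dA] in auto)

lemma kron_one_diag: "kron (1\<^sub>m dA) (mat_diag dB f) = mat_diag (dA*dB) (\<lambda>k. f (k mod dB))"
proof (rule eq_matI)
  fix i j assume "i < dim_row (mat_diag (dA*dB) (\<lambda>k. f (k mod dB)))" "j < dim_col (mat_diag (dA*dB) (\<lambda>k. f (k mod dB)))"
  hence i: "i < dA*dB" and j: "j < dA*dB" by auto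
  have iff: "i = j \<longleftrightarrow> i div dB = j div dB \<and> i mod dB = j mod dB"
    by (metis div_mult_mod_eq)
  have "kron (1\<^sub>m dA) (mat_diag dB f) $$ (i,j) = (if i div dB = j div dB then mat_diag dB f $$ (i mod dB, j mod dB) else 0)"
    by (rule index_kron_one[OF mat_diag_dim i j])
  also have "\<dots> = mat_diag (dA*dB) (\<lambda>k. f (k mod dB)) $$ (i,j)"
    using i j mod_less_of_less_mult[OF i] mod_less_of_less_mult[OF j] iff by (auto simp: mat_diag_def)
  finally show "kron (1\<^sub>m dA) (mat_diag dB f) $$ (i,j) = mat_diag (dA*dB) (\<lambda>k. f (k mod dB)) $$ (i,j)" .
qed (use carrier_matD[OF kron_one_carrier[OF mat_diag_dim[of dB f], of dA]] in auto)

lemma kron_one_one: "kron (1\<^sub>m dA) (1\<^sub>m dB) = 1\<^sub>m (dA*dB)"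
  using kron_one_diag[of dA dB "\<lambda>_. 1"] by simp

lemma unitary_kron_one:
  assumes U: "unitary dB U"
  shows "unitary (dA * dB) (kron (1\<^sub>m dA) U)"
proof -
  have Uc: "U \<in> carrier_mat dB dB" using U by (rule unitary_carrier)
  have "mat_adjoint (kron (1\<^sub>m dA) U) * kron (1\<^sub>m dA) U = 1\<^sub>m (dA * dB)"
    using U Uc by (simp add: mat_adjoint_kron_one kron_one_mult[OF mat_adjoint_carrier[OF Uc] Uc]
        unitary_adjoint_mult kron_one_one)
  then show ?thesis using Uc by (simp add: unitary_def)
qed

lemma kron_smult_one: "kron (c \<cdot>\<^sub>m 1\<^sub>m dA) M = c \<cdot>\<^sub>m kron (1\<^sub>m dA) M"
  by (rule eq_matI) (auto simp: kron_def div_less_of_less_mult)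

lemma minus_kron_uniform_carrier:
  "S \<in> carrier_mat dB dB \<Longrightarrow> R - kron ((1 / of_nat dA) \<cdot>\<^sub>m 1\<^sub>m dA) S \<in> carrier_mat (dA * dB) (dA * dB)"
  unfolding kron_smult_one by (rule minus_carrier_mat) simp

lemma mtrace_kron_one: "M \<in> carrier_mat dB dB \<Longrightarrow> mtrace (kron (1\<^sub>m dA) M) = of_nat dA * mtrace M"
proof -
  assume M: "M \<in> carrier_mat dB dB"
  have "mtrace (kron (1\<^sub>m dA) M) = (\<Sum>k<dA*dB. M $$ (k mod dB, k mod dB))"
    unfolding mtrace_def using kron_one_carrier[OF M, of dA] by (auto simp: index_kron_one[OF M] intro!: sum.cong)
  also have "\<dots> = (\<Sum>a<dA. \<Sum>c<dB. M $$ (c,c))" by (rule sum_lessThan_mult_div_mod[where g = "\<lambda>a c. M $$ (c,c)"])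
  finally show ?thesis using M by (simp add: mtrace_def)
qed

lemma ptrace_A_carrier[simp]: "ptrace_A dA dB R \<in> carrier_mat dB dB"
  by (simp add: ptrace_A_def)

lemma dim_ptrace_A[simp]: "dim_row (ptrace_A dA dB R) = dB" "dim_col (ptrace_A dA dB R) = dB"
  by (simp_all add: ptrace_A_def)

lemma index_ptrace_A: "i < dB \<Longrightarrow> j < dB \<Longrightarrow> ptrace_A dA dB R $$ (i,j) = (\<Sum>a<dA. R $$ (a*dB + i, a*dB + j))"
  by (simp add: ptrace_A_def)

lemma ptrace_A_mult_kron_one: assumes R: "R \<in> carrier_mat (dA*dB) (dA*dB)" and M: "M \<in> carrier_mat dB dB"
  shows "ptrace_A dA dB (R * kron (1\<^sub>m dA) M) = ptrace_A dA dB R * M"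
proof (rule eq_matI)
  fix b c assume "b < dim_row (ptrace_A dA dB R * M)" "c < dim_col (ptrace_A dA dB R * M)"
  hence b: "b < dB" and c: "c < dB" using M by auto
  have "ptrace_A dA dB (R * kron (1\<^sub>m dA) M) $$ (b,c) = (\<Sum>a<dA. \<Sum>k<dA*dB. R $$ (a*dB+b, k) * kron (1\<^sub>m dA) M $$ (k, a*dB+c))"
    using b c
    by (auto simp: index_ptrace_A index_mult_mat_sum[OF R kron_one_carrier[OF M]]
        simp del: index_mult_mat(1) intro!: sum.cong)
  also have "\<dots> = (\<Sum>a<dA. \<Sum>a'<dA. \<Sum>d<dB. R $$ (a*dB+b, a'*dB+d) * (if a' = a then M $$ (d, c) else 0))"
    using b c by (simp only: sum_lessThan_mult) (intro sum.cong refl, simp add: index_kron_one[OF M])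
  also have "\<dots> = (\<Sum>a<dA. \<Sum>d<dB. R $$ (a*dB+b, a*dB+d) * M $$ (d, c))"
    by (rule sum.cong[OF refl]) (simp add: delta_simps)
  also have "\<dots> = (\<Sum>d<dB. (\<Sum>a<dA. R $$ (a*dB+b, a*dB+d)) * M $$ (d, c))"
    by (subst sum.swap) (simp add: sum_distrib_right)
  also have "\<dots> = (ptrace_A dA dB R * M) $$ (b,c)"
    using b c M
    by (auto simp: index_mult_mat_sum[OF ptrace_A_carrier M] index_ptrace_A
        simp del: index_mult_mat(1) intro!: sum.cong)
  finally show "ptrace_A dA dB (R * kron (1\<^sub>m dA) M) $$ (b,c) = (ptrace_A dA dB R * M) $$ (b,c)" .
qed (use M in \<open>auto simp: ptrace_A_def\<close>)

lemma ptrace_A_kron_one_mult: assumes R: "R \<in> carrier_mat (dA*dB) (dA*dB)" and M: "M \<in> carrier_mat dB dB"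
  shows "ptrace_A dA dB (kron (1\<^sub>m dA) M * R) = M * ptrace_A dA dB R"
proof (rule eq_matI)
  fix b c assume "b < dim_row (M * ptrace_A dA dB R)" "c < dim_col (M * ptrace_A dA dB R)"
  hence b: "b < dB" and c: "c < dB" using M by auto
  have "ptrace_A dA dB (kron (1\<^sub>m dA) M * R) $$ (b,c) = (\<Sum>a<dA. \<Sum>k<dA*dB. kron (1\<^sub>m dA) M $$ (a*dB+b, k) * R $$ (k, a*dB+c))"
    using b c
    by (auto simp: index_ptrace_A index_mult_mat_sum[OF kron_one_carrier[OF M] R]
        simp del: index_mult_mat(1) intro!: sum.cong)
  also have "\<dots> = (\<Sum>a<dA. \<Sum>a'<dA. \<Sum>d<dB. (if a = a' then M $$ (b, d) else 0) * R $$ (a'*dB+d, a*dB+c))"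
    using b c by (simp only: sum_lessThan_mult) (intro sum.cong refl, simp add: index_kron_one[OF M])
  also have "\<dots> = (\<Sum>a<dA. \<Sum>d<dB. M $$ (b, d) * R $$ (a*dB+d, a*dB+c))"
    by (rule sum.cong[OF refl]) (simp add: delta_simps)
  also have "\<dots> = (\<Sum>d<dB. M $$ (b, d) * (\<Sum>a<dA. R $$ (a*dB+d, a*dB+c)))"
    by (subst sum.swap) (simp add: sum_distrib_left)
  also have "\<dots> = (M * ptrace_A dA dB R) $$ (b,c)"
    using b c M
    by (auto simp: index_mult_mat_sum[OF M ptrace_A_carrier] index_ptrace_A
        simp del: index_mult_mat(1) intro!: sum.cong)
  finally show "ptrace_A dA dB (kron (1\<^sub>m dA) M * R) $$ (b,c) = (M * ptrace_A dA dB R) $$ (b,c)" .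
qed (use M in \<open>auto simp: ptrace_A_def\<close>)

lemma mtrace_ptrace_A:
  assumes "R \<in> carrier_mat (dA * dB) (dA * dB)"
  shows "mtrace (ptrace_A dA dB R) = mtrace R"
proof -
  have "mtrace R = (\<Sum>a<dA. \<Sum>c<dB. R $$ (a * dB + c, a * dB + c))"
    unfolding mtrace_def using assms by (simp add: sum_lessThan_mult)
  also have "\<dots> = mtrace (ptrace_A dA dB R)"
    unfolding mtrace_def by (simp add: index_ptrace_A) (rule sum.swap)
  finally show ?thesis ..
qed

lemma mtrace_mult_kron_one:
  assumes R: "R \<in> carrier_mat (dA * dB) (dA * dB)" and M: "M \<in> carrier_mat dB dB"
  shows "mtrace (R * kron (1\<^sub>m dA) M) = mtrace (ptrace_A dA dB R * M)"
proof -
  have "R * kron (1\<^sub>m dA) M \<in> carrier_mat (dA * dB) (dA * dB)"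
    using R M by (simp add: mult_carrier_mat[of _ "dA * dB" "dA * dB" _ "dA * dB"])
  then show ?thesis using mtrace_ptrace_A[of _ dA dB] ptrace_A_mult_kron_one[OF R M] by metis
qed

section \<open>Positive semidefinite matrices\<close>

definition quad_form :: "complex mat \<Rightarrow> (nat \<Rightarrow> complex) \<Rightarrow> nat \<Rightarrow> complex" where
  "quad_form A u n = (\<Sum>i<n. \<Sum>j<n. cnj (u i) * A $$ (i,j) * u j)"

lemma quad_form_vec: assumes A: "A \<in> carrier_mat n n"
  shows "(A *\<^sub>v vec n u) \<bullet>c vec n u = quad_form A u n"
proof -
  have "(A *\<^sub>v vec n u) \<bullet>c vec n u = (\<Sum>i<n. (\<Sum>j<n. A $$ (i,j) * u j) * cnj (u i))"
    using A by (auto simp: scalar_prod_def lessThan_atLeast0 intro!: sum.cong)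
  also have "\<dots> = quad_form A u n"
    unfolding quad_form_def
    by (auto simp: sum_distrib_left sum_distrib_right mult.commute mult.left_commute intro!: sum.cong)
  finally show ?thesis .
qed

lemma psd_quad_form_nonneg: "psd n A \<Longrightarrow> 0 \<le> Re (quad_form A u n)"
proof -
  assume p: "psd n A"
  hence A: "A \<in> carrier_mat n n" by (simp add: psd_def)
  have "0 \<le> Re ((A *\<^sub>v vec n u) \<bullet>c vec n u)" using p by (simp add: psd_def)
  thus ?thesis using quad_form_vec[OF A] by simp
qed

lemma psdI_quad_form: assumes A: "A \<in> carrier_mat n n" and h: "hermitian A"
  and q: "\<And>u. 0 \<le> Re (quad_form A u n)" shows "psd n A"
  unfolding psd_def
proof (intro conjI ballI A h)
  fix v :: "complex vec" assume v: "v \<in> carrier_vec n"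
  have "v = vec n (\<lambda>i. v $ i)" using v by auto
  hence "(A *\<^sub>v v) \<bullet>c v = quad_form A (\<lambda>i. v $ i) n" using quad_form_vec[OF A] by metis
  thus "0 \<le> Re ((A *\<^sub>v v) \<bullet>c v)" using q by simp
qed

lemma psdD: "psd n A \<Longrightarrow> A \<in> carrier_mat n n" "psd n A \<Longrightarrow> hermitian A"
  by (simp_all add: psd_def)

lemma cnj_delta: "cnj (if P then x else 0) = (if P then cnj x else 0)" by simp

lemma sum_swap4: "(\<Sum>i<n. \<Sum>j<n. \<Sum>k<n. \<Sum>l<(n::nat). (F i j k l :: complex)) = (\<Sum>k<n. \<Sum>l<n. \<Sum>i<n. \<Sum>j<n. F i j k l)"
proof -
  have "(\<Sum>i<n. \<Sum>j<n. \<Sum>k<n. \<Sum>l<n. F i j k l) = (\<Sum>i<n. \<Sum>k<n. \<Sum>j<n. \<Sum>l<n. F i j k l)"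
    by (rule sum.cong[OF refl], rule sum.swap)
  also have "\<dots> = (\<Sum>k<n. \<Sum>i<n. \<Sum>j<n. \<Sum>l<n. F i j k l)" by (rule sum.swap)
  also have "\<dots> = (\<Sum>k<n. \<Sum>i<n. \<Sum>l<n. \<Sum>j<n. F i j k l)"
    by (rule sum.cong[OF refl], rule sum.cong[OF refl], rule sum.swap)
  also have "\<dots> = (\<Sum>k<n. \<Sum>l<n. \<Sum>i<n. \<Sum>j<n. F i j k l)"
    by (rule sum.cong[OF refl], rule sum.swap)
  finally show ?thesis .
qed

lemma sum_mult_two_point: "i \<noteq> j \<Longrightarrow> i < n \<Longrightarrow> j < (n::nat) \<Longrightarrow>
  (\<Sum>l<n. f l * (if l = i then x else if l = j then y else 0)) = f i * x + f j * (y::complex)"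
proof -
  assume ij: "i \<noteq> j" "i < n" "j < n"
  have "(\<Sum>l<n. f l * (if l = i then x else if l = j then y else 0)) =
        (\<Sum>l<n. (if l = i then f l * x else 0) + (if l = j then f l * y else 0))"
    using ij by (intro sum.cong) auto
  also have "\<dots> = f i * x + f j * y" using ij by (simp add: sum.distrib)
  finally show ?thesis .
qed

lemma sum_cnj_two_point_mult: "i \<noteq> j \<Longrightarrow> i < n \<Longrightarrow> j < (n::nat) \<Longrightarrow>
  (\<Sum>l<n. cnj (if l = i then x else if l = j then y else 0) * f l) = cnj x * f i + cnj y * (f j :: complex)"
proof -
  assume ij: "i \<noteq> j" "i < n" "j < n"
  have "(\<Sum>l<n. cnj (if l = i then x else if l = j then y else 0) * f l) =
        (\<Sum>l<n. (if l = i then cnj x * f l else 0) + (if l = j then cnj y * f l else 0))"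
    using ij by (intro sum.cong) auto
  also have "\<dots> = cnj x * f i + cnj y * f j" using ij by (simp add: sum.distrib)
  finally show ?thesis .
qed

lemma quad_form_two: assumes "i \<noteq> j" "i < n" "j < n"
  shows "quad_form A (\<lambda>l. if l = i then x else if l = j then y else 0) n =
    cnj x * (A $$ (i,i) * x + A $$ (i,j) * y) + cnj y * (A $$ (j,i) * x + A $$ (j,j) * y)"
proof -
  let ?u = "\<lambda>l. if l = i then x else if l = j then y else 0"
  have "quad_form A ?u n = (\<Sum>k<n. cnj (?u k) * (\<Sum>l<n. A $$ (k,l) * ?u l))"
    unfolding quad_form_def by (simp add: sum_distrib_left mult.assoc)
  also have "\<dots> = (\<Sum>k<n. cnj (?u k) * (A $$ (k,i) * x + A $$ (k,j) * y))"
    using assms by (simp add: sum_mult_two_point)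
  also have "\<dots> = cnj x * (A $$ (i,i) * x + A $$ (i,j) * y) + cnj y * (A $$ (j,i) * x + A $$ (j,j) * y)"
    using assms by (rule sum_cnj_two_point_mult)
  finally show ?thesis .
qed

lemma psd_diag_zero_row: assumes p: "psd n A" and i: "i < n" and z: "A $$ (i,i) = 0" and j: "j < n"
  shows "A $$ (i,j) = 0"
proof (cases "i = j")
  case True thus ?thesis using z by simp
next
  case False
  have A: "A \<in> carrier_mat n n" and h: "hermitian A" using p by (auto simp: psd_def)
  have hji: "A $$ (j,i) = cnj (A $$ (i,j))" using hermitian_index[OF A h j i] .
  define a where "a = A $$ (i,j)"
  define t :: real where "t = (Re (A $$ (j,j)) + 1) / (2 * (cmod a)^2)"
  show ?thesis
  proof (rule ccontr)
    assume "A $$ (i,j) \<noteq> 0"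
    hence a0: "a \<noteq> 0" by (simp add: a_def)
    hence ca: "(cmod a)^2 > 0" by simp
    define x where "x = - complex_of_real t * a"
    have "0 \<le> Re (quad_form A (\<lambda>l. if l = i then x else if l = j then 1 else 0) n)" by (rule psd_quad_form_nonneg[OF p])
    also have "quad_form A (\<lambda>l. if l = i then x else if l = j then 1 else 0) n = cnj x * a + cnj a * x + A $$ (j,j)"
      using quad_form_two[OF False i j, of A x 1] z hji by (simp add: a_def algebra_simps)
    also have "Re (cnj x * a + cnj a * x + A $$ (j,j)) = - 2 * t * (cmod a)^2 + Re (A $$ (j,j))"
    proof -
      have cm: "cmod a * cmod a = Re a * Re a + Im a * Im a" by (metis cmod_power2 power2_eq_square)
      show ?thesis unfolding x_def by (simp add: cm algebra_simps power2_eq_square)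
    qed
    also have "\<dots> = -1" unfolding t_def using ca by (simp add: field_simps)
    finally show False by simp
  qed
qed

lemma psd_diag_real: assumes p: "psd n A" and i: "i < n"
  shows "A $$ (i,i) = complex_of_real (Re (A $$ (i,i)))" "0 \<le> Re (A $$ (i,i))"
proof -
  have A: "A \<in> carrier_mat n n" and h: "hermitian A" using p by (auto simp: psd_def)
  have "A $$ (i,i) = cnj (A $$ (i,i))" using hermitian_index[OF A h i i] .
  hence "Im (A $$ (i,i)) = 0" by (metis cnj.simps(2) neg_equal_zero)
  thus "A $$ (i,i) = complex_of_real (Re (A $$ (i,i)))" by (simp add: complex_eq_iff)
  have "quad_form A (\<lambda>l. if l = i then 1 else 0) n = A $$ (i,i)"
    using i by (simp add: quad_form_def delta_simps cnj_delta)
  thus "0 \<le> Re (A $$ (i,i))" using psd_quad_form_nonneg[OF p, of "\<lambda>l. if l = i then 1 else 0"] by simp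
qed

lemma quad_form_conj: assumes W: "W \<in> carrier_mat n n" and A: "A \<in> carrier_mat n n"
  shows "quad_form (mat_adjoint W * A * W) u n = quad_form A (\<lambda>k. \<Sum>j<n. W $$ (k,j) * u j) n"
proof -
  have e: "(mat_adjoint W * A * W) $$ (i,j) = (\<Sum>k<n. \<Sum>l<n. cnj (W $$ (k,i)) * A $$ (k,l) * W $$ (l,j))"
    if "i < n" "j < n" for i j
  proof -
    have WA: "mat_adjoint W * A \<in> carrier_mat n n" using W A by (simp add: mult_carrier_mat[of _ n n _ n])
    have "(mat_adjoint W * A * W) $$ (i,j) = (\<Sum>l<n. (mat_adjoint W * A) $$ (i,l) * W $$ (l,j))"
      by (rule index_mult_mat_sum[OF WA W that])
    also have "\<dots> = (\<Sum>l<n. (\<Sum>k<n. cnj (W $$ (k,i)) * A $$ (k,l)) * W $$ (l,j))"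
      using that W A by (intro sum.cong refl) (simp add: index_adjoint_mult_sum[OF W A] del: index_mult_mat(1))
    also have "\<dots> = (\<Sum>k<n. \<Sum>l<n. cnj (W $$ (k,i)) * A $$ (k,l) * W $$ (l,j))"
      by (simp add: sum_distrib_right) (rule sum.swap)
    finally show ?thesis .
  qed
  have "quad_form (mat_adjoint W * A * W) u n = (\<Sum>i<n. \<Sum>j<n. \<Sum>k<n. \<Sum>l<n. cnj (u i) * (cnj (W $$ (k,i)) * A $$ (k,l) * W $$ (l,j)) * u j)"
    unfolding quad_form_def by (intro sum.cong refl) (simp add: e sum_distrib_left sum_distrib_right)
  also have "\<dots> = (\<Sum>k<n. \<Sum>l<n. \<Sum>i<n. \<Sum>j<n. cnj (u i) * (cnj (W $$ (k,i)) * A $$ (k,l) * W $$ (l,j)) * u j)"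
    by (rule sum_swap4)
  also have "\<dots> = quad_form A (\<lambda>k. \<Sum>j<n. W $$ (k,j) * u j) n"
    unfolding quad_form_def
    by (intro sum.cong refl) (simp add: cnj_sum sum_distrib_left sum_distrib_right mult.commute mult.left_commute)
  finally show ?thesis .
qed

lemma psd_conj: assumes p: "psd n A" and W: "W \<in> carrier_mat n n"
  shows "psd n (mat_adjoint W * A * W)"
proof -
  have A: "A \<in> carrier_mat n n" and h: "hermitian A" using p by (auto simp: psd_def)
  have WA: "mat_adjoint W \<in> carrier_mat n n" using W by simp
  show ?thesis
  proof (rule psdI_quad_form)
    show "mat_adjoint W * A * W \<in> carrier_mat n n" using W A WA by (simp add: mult_carrier_mat[of _ n n _ n])
    show "hermitian (mat_adjoint W * A * W)" by (rule hermitian_conj[OF A W h])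
    fix u show "0 \<le> Re (quad_form (mat_adjoint W * A * W) u n)"
      unfolding quad_form_conj[OF W A] by (rule psd_quad_form_nonneg[OF p])
  qed
qed

lemma hermitian_ptrace_A:
  assumes R: "R \<in> carrier_mat (dA * dB) (dA * dB)" and h: "hermitian R"
  shows "hermitian (ptrace_A dA dB R)"
  unfolding hermitian_def
proof (rule eq_matI)
  fix i j assume "i < dim_row (ptrace_A dA dB R)" "j < dim_col (ptrace_A dA dB R)"
  then have i: "i < dB" and j: "j < dB" by auto
  show "mat_adjoint (ptrace_A dA dB R) $$ (i,j) = ptrace_A dA dB R $$ (i,j)"
    using i j
    by (auto simp: index_ptrace_A cnj_sum hermitian_index[OF R h, of "_ * dB + i" "_ * dB + j"]
        intro!: sum.cong)
qed auto

lemma psd_ptrace_A: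
  assumes p: "psd (dA * dB) R"
  shows "psd dB (ptrace_A dA dB R)"
proof (rule psdI_quad_form)
  show "ptrace_A dA dB R \<in> carrier_mat dB dB" by simp
  show "hermitian (ptrace_A dA dB R)" using psdD[OF p] by (rule hermitian_ptrace_A)
  fix u
  define w where "w = (\<lambda>a k. if k div dB = a then u (k mod dB) else (0::complex))"
  have qa: "quad_form R (w a) (dA*dB) = (\<Sum>c<dB. \<Sum>c'<dB. cnj (u c) * R $$ (a*dB+c, a*dB+c') * u c')" if a: "a < dA" for a
  proof -
    have "quad_form R (w a) (dA*dB) = (\<Sum>a1<dA. \<Sum>c<dB. \<Sum>a2<dA. \<Sum>c'<dB.
        cnj (if a1 = a then u c else 0) * R $$ (a1*dB+c, a2*dB+c') * (if a2 = a then u c' else 0))"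
      unfolding quad_form_def w_def by (simp only: sum_lessThan_mult) (intro sum.cong refl, simp)
    also have "\<dots> = (\<Sum>c<dB. \<Sum>c'<dB. cnj (u c) * R $$ (a*dB+c, a*dB+c') * u c')"
      using a by (simp add: delta_simps cnj_delta)
    finally show ?thesis .
  qed
  have "(\<Sum>a<dA. quad_form R (w a) (dA*dB)) = (\<Sum>a<dA. \<Sum>c<dB. \<Sum>c'<dB. cnj (u c) * R $$ (a*dB+c, a*dB+c') * u c')"
    by (rule sum.cong[OF refl]) (simp add: qa)
  also have "\<dots> = (\<Sum>c<dB. \<Sum>c'<dB. \<Sum>a<dA. cnj (u c) * R $$ (a*dB+c, a*dB+c') * u c')"
    by (subst sum.swap, rule sum.cong[OF refl], rule sum.swap)
  also have "\<dots> = quad_form (ptrace_A dA dB R) u dB"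
    unfolding quad_form_def by (intro sum.cong refl) (simp add: index_ptrace_A sum_distrib_left sum_distrib_right)
  finally have "quad_form (ptrace_A dA dB R) u dB = (\<Sum>a<dA. quad_form R (w a) (dA*dB))" by simp
  moreover have "0 \<le> Re (\<Sum>a<dA. quad_form R (w a) (dA*dB))"
    using psd_quad_form_nonneg[OF p] by (simp add: sum_nonneg)
  ultimately show "0 \<le> Re (quad_form (ptrace_A dA dB R) u dB)" by simp
qed

section \<open>A weighted bound on the trace norm\<close>

definition inv_sqrt :: "real \<Rightarrow> real" where
  "inv_sqrt x = (if x > 0 then 1 / sqrt x else 0)"

lemma inv_sqrt_nonneg [simp]: "0 \<le> inv_sqrt x"
  by (simp add: inv_sqrt_def)

lemma pinv_sqrt_unitary_diag:
  "unitary n U \<Longrightarrow> A = U * real_diag n d * mat_adjoint U \<Longrightarrow>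
   pinv_sqrt n A = U * real_diag n (inv_sqrt \<circ> d) * mat_adjoint U"
  unfolding pinv_sqrt_def inv_sqrt_def[abs_def] by (rule mat_fun_unitary_diag)

lemma pinv_sqrt_carrier:
  assumes "A \<in> carrier_mat n n" "hermitian A"
  shows "pinv_sqrt n A \<in> carrier_mat n n"
proof -
  obtain U d where U: "unitary n U" and A: "A = U * real_diag n d * mat_adjoint U"
    using hermitian_spectral[OF assms] by blast
  show ?thesis
    using unitary_carrier[OF U]
    by (simp add: pinv_sqrt_unitary_diag[OF U A] mult_carrier_mat[of _ n n _ n])
qed

lemma mtrace_hermitian_diag_square:
  assumes X: "X \<in> carrier_mat n n" and h: "hermitian X"
  shows "Re (mtrace (X * real_diag n f * X * real_diag n f)) =
    (\<Sum>i<n. \<Sum>j<n. (cmod (X $$ (i,j)))\<^sup>2 * (f i * f j))"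
proof -
  have XD: "X * real_diag n f \<in> carrier_mat n n" using X by (simp add: mult_carrier_mat[of _ n n _ n])
  have XDX: "X * real_diag n f * X \<in> carrier_mat n n" using XD X by (simp add: mult_carrier_mat[of _ n n _ n])
  have XDi: "(X * real_diag n f) $$ (i,j) = X $$ (i,j) * complex_of_real (f j)" if "i < n" "j < n" for i j
    using X that by (simp add: mat_diag_mult_right[OF X])
  have "mtrace (X * real_diag n f * X * real_diag n f) = (\<Sum>i<n. (X * real_diag n f * X) $$ (i,i) * complex_of_real (f i))"
    unfolding mtrace_def using XDX by (simp add: mat_diag_mult_right[OF XDX])
  also have "\<dots> = (\<Sum>i<n. \<Sum>j<n. X $$ (i,j) * complex_of_real (f j) * X $$ (j,i) * complex_of_real (f i))"
    by (intro sum.cong refl)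
       (simp add: index_mult_mat_sum[OF XD X] XDi sum_distrib_right del: index_mult_mat(1))
  also have "\<dots> = (\<Sum>i<n. \<Sum>j<n. complex_of_real ((cmod (X $$ (i,j)))\<^sup>2 * (f i * f j)))"
  proof (intro sum.cong refl)
    fix i j assume "i \<in> {..<n}" "j \<in> {..<n}"
    then have e: "X $$ (j,i) = cnj (X $$ (i,j))" using hermitian_index[OF X h, of j i] by simp
    show "X $$ (i,j) * complex_of_real (f j) * X $$ (j,i) * complex_of_real (f i) =
        complex_of_real ((cmod (X $$ (i,j)))\<^sup>2 * (f i * f j))"
      unfolding e of_real_mult complex_norm_square by (simp only: mult_ac)
  qed
  finally show ?thesis by (simp add: Re_sum)
qed

lemma unitary_col_norm:
  assumes S: "unitary n S" and i: "i < n"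
  shows "(\<Sum>j<n. (cmod (S $$ (j,i)))\<^sup>2) = 1"
proof -
  have "complex_of_real (\<Sum>j<n. (cmod (S $$ (j,i)))\<^sup>2) = (mat_adjoint S * S) $$ (i,i)"
    by (rule index_adjoint_mult_self[OF unitary_carrier[OF S] i, symmetric])
  also have "\<dots> = 1" using S i by (simp add: unitary_adjoint_mult)
  finally show ?thesis by (metis of_real_eq_1_iff)
qed

lemma L2_set_hermitian_unitary_weighted_le:
  assumes S: "unitary n S" "hermitian S" and t: "\<And>i. i < n \<Longrightarrow> 0 \<le> t i"
  shows "L2_set (\<lambda>(i,j). cmod (S $$ (j,i)) * sqrt (sqrt (t i) * sqrt (t j))) ({..<n} \<times> {..<n})
    \<le> sqrt (\<Sum>i<n. t i)"
proof -
  have Sc: "S \<in> carrier_mat n n" using S(1) by (rule unitary_carrier)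
  have L2: "(L2_set (\<lambda>(i,j). cmod (S $$ (j,i)) * sqrt (sqrt (t i) * sqrt (t j))) ({..<n} \<times> {..<n}))\<^sup>2
      = (\<Sum>i<n. \<Sum>j<n. (cmod (S $$ (j,i)))\<^sup>2 * (sqrt (t i) * sqrt (t j)))"
    unfolding L2_set_def sum.cartesian_product using t
    by (subst real_sqrt_pow2) (auto intro!: sum_nonneg sum.cong simp: power_mult_distrib)
  have rows: "(\<Sum>i<n. (cmod (S $$ (j,i)))\<^sup>2) = 1" if j: "j < n" for j
  proof -
    have "(\<Sum>i<n. (cmod (S $$ (j,i)))\<^sup>2) = (\<Sum>i<n. (cmod (S $$ (i,j)))\<^sup>2)"
      using hermitian_index[OF Sc S(2) j] by (intro sum.cong refl) simp
    then show ?thesis using unitary_col_norm[OF S(1) j] by simp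
  qed
  have "(\<Sum>i<n. \<Sum>j<n. (cmod (S $$ (j,i)))\<^sup>2 * (sqrt (t i) * sqrt (t j)))
      \<le> (\<Sum>i<n. \<Sum>j<n. (cmod (S $$ (j,i)))\<^sup>2 * ((t i + t j) / 2))"
  proof (intro sum_mono mult_left_mono)
    fix i j assume "i \<in> {..<n}" "j \<in> {..<n}"
    then have "(sqrt (t i))\<^sup>2 = t i" "(sqrt (t j))\<^sup>2 = t j" using t by simp_all
    moreover have "0 \<le> (sqrt (t i) - sqrt (t j))\<^sup>2" by simp
    ultimately show "sqrt (t i) * sqrt (t j) \<le> (t i + t j) / 2"
      by (simp add: power2_eq_square algebra_simps)
  qed simp
  also have "\<dots> = (\<Sum>i<n. t i * (\<Sum>j<n. (cmod (S $$ (j,i)))\<^sup>2)) / 2 +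
                  (\<Sum>j<n. t j * (\<Sum>i<n. (cmod (S $$ (j,i)))\<^sup>2)) / 2"
    by (simp add: sum_distrib_left sum_distrib_right sum.distrib add_divide_distrib algebra_simps
        sum_divide_distrib) (subst sum.swap, simp)
  also have "\<dots> = (\<Sum>i<n. t i)"
    using unitary_col_norm[OF S(1)] rows by simp
  finally show ?thesis
    unfolding L2[symmetric] by (rule real_le_rsqrt)
qed

lemma Re_mtrace_mult_le:
  assumes X: "X \<in> carrier_mat n n" and S: "S \<in> carrier_mat n n"
  shows "Re (mtrace (X * S)) \<le> (\<Sum>i<n. \<Sum>j<n. cmod (X $$ (i,j)) * cmod (S $$ (j,i)))"
proof -
  have "Re (mtrace (X * S)) = (\<Sum>i<n. \<Sum>j<n. Re (X $$ (i,j) * S $$ (j,i)))"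
    unfolding mtrace_def using X S by (simp add: index_mult_mat_sum[OF X S] Re_sum del: index_mult_mat(1))
  also have "\<dots> \<le> (\<Sum>i<n. \<Sum>j<n. cmod (X $$ (i,j)) * cmod (S $$ (j,i)))"
    by (intro sum_mono) (metis complex_Re_le_cmod norm_mult)
  finally show ?thesis .
qed

lemma mtrace_mult_le_weighted:
  assumes X: "X \<in> carrier_mat n n" "hermitian X" and S: "unitary n S" "hermitian S"
    and t: "\<And>i. i < n \<Longrightarrow> 0 \<le> t i"
    and zero: "\<And>i j. i < n \<Longrightarrow> j < n \<Longrightarrow> t i = 0 \<or> t j = 0 \<Longrightarrow> X $$ (i,j) = 0"
  defines "D \<equiv> real_diag n (inv_sqrt \<circ> t)"
  shows "Re (mtrace (X * S)) \<le> sqrt (Re (mtrace (X * D * X * D))) * sqrt (\<Sum>i<n. t i)"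
proof -
  have Sc: "S \<in> carrier_mat n n" using S(1) by (rule unitary_carrier)
  define I where "I = {..<n} \<times> {..<n}"
  define x where "x = (\<lambda>(i,j). cmod (X $$ (i,j)) * sqrt (inv_sqrt (t i) * inv_sqrt (t j)))"
  define y where "y = (\<lambda>(i,j). cmod (S $$ (j,i)) * sqrt (sqrt (t i) * sqrt (t j)))"
  have xy: "cmod (X $$ (i,j)) * cmod (S $$ (j,i)) = x (i,j) * y (i,j)" if "i < n" "j < n" for i j
  proof (cases "t i = 0 \<or> t j = 0")
    case True
    then show ?thesis using zero[OF that] by (simp add: x_def y_def)
  next
    case False
    then have "t i > 0" "t j > 0" using t that by force+
    then have "sqrt (inv_sqrt (t i) * inv_sqrt (t j)) * sqrt (sqrt (t i) * sqrt (t j)) = 1"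
      by (simp add: inv_sqrt_def real_sqrt_mult[symmetric])
    then show ?thesis by (simp add: x_def y_def algebra_simps)
  qed
  have "Re (mtrace (X * S)) \<le> (\<Sum>i<n. \<Sum>j<n. cmod (X $$ (i,j)) * cmod (S $$ (j,i)))"
    by (rule Re_mtrace_mult_le[OF X(1) Sc])
  also have "\<dots> = (\<Sum>i<n. \<Sum>j<n. x (i,j) * y (i,j))"
    by (intro sum.cong refl) (simp add: xy)
  also have "\<dots> = (\<Sum>p\<in>I. \<bar>x p\<bar> * \<bar>y p\<bar>)"
    unfolding I_def sum.cartesian_product using t by (intro sum.cong refl) (auto simp: x_def y_def)
  also have "\<dots> \<le> L2_set x I * L2_set y I"
    by (rule L2_set_mult_ineq)
  finally have "Re (mtrace (X * S)) \<le> L2_set x I * L2_set y I" .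
  moreover have "L2_set x I = sqrt (Re (mtrace (X * D * X * D)))"
    unfolding L2_set_def D_def mtrace_hermitian_diag_square[OF X]
    by (simp add: I_def x_def sum.cartesian_product power_mult_distrib split_def)
  moreover have "L2_set y I \<le> sqrt (\<Sum>i<n. t i)"
    unfolding y_def I_def by (rule L2_set_hermitian_unitary_weighted_le[OF S t])
  ultimately show ?thesis using L2_set_nonneg[of x I] by (metis mult_left_mono order_trans)
qed

lemma trace_norm_unitary_conj:
  assumes X: "X \<in> carrier_mat n n" "hermitian X" and W: "unitary n W"
  shows "trace_norm n (mat_adjoint W * X * W) = trace_norm n X"
proof -
  obtain V l where V: "unitary n V" and Xeq: "X = V * real_diag n l * mat_adjoint V"
    using hermitian_spectral[OF X] by blast
  have "mat_adjoint W * X * W =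
      (mat_adjoint W * V) * real_diag n l * mat_adjoint (mat_adjoint W * V)"
    using conj_mult_conj[OF mat_adjoint_carrier[OF unitary_carrier[OF W]] unitary_carrier[OF V]
        mat_diag_dim, of "\<lambda>i. complex_of_real (l i)"]
    by (simp add: Xeq)
  then show ?thesis
    using trace_norm_unitary_diag[OF unitary_mult[OF unitary_adjoint[OF W] V]]
      trace_norm_unitary_diag[OF V Xeq] by simp
qed

lemma trace_norm_le_weighted_diag:
  assumes X: "X \<in> carrier_mat n n" "hermitian X" and t: "\<And>i. i < n \<Longrightarrow> 0 \<le> t i"
    and zero: "\<And>i j. i < n \<Longrightarrow> j < n \<Longrightarrow> t i = 0 \<or> t j = 0 \<Longrightarrow> X $$ (i,j) = 0"
  defines "D \<equiv> real_diag n (inv_sqrt \<circ> t)"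
  shows "trace_norm n X \<le> sqrt (Re (mtrace (X * D * X * D))) * sqrt (\<Sum>i<n. t i)"
proof -
  obtain S where "S \<in> carrier_mat n n" and S: "hermitian S" "unitary n S"
    and tn: "Re (mtrace (X * S)) = trace_norm n X"
    using trace_norm_eq_mtrace_sign[OF X] by blast
  have "Re (mtrace (X * S)) \<le> sqrt (Re (mtrace (X * D * X * D))) * sqrt (\<Sum>i<n. t i)"
    unfolding D_def by (rule mtrace_mult_le_weighted[OF X S(2,1) t zero])
  then show ?thesis using tn by simp
qed

lemma trace_norm_le_weighted:
  assumes X: "X \<in> carrier_mat n n" "hermitian X" and W: "unitary n W"
    and t: "\<And>i. i < n \<Longrightarrow> 0 \<le> t i"
    and zero: "\<And>i j. i < n \<Longrightarrow> j < n \<Longrightarrow> t i = 0 \<Longrightarrow> (mat_adjoint W * X * W) $$ (i,j) = 0"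
  defines "M \<equiv> W * real_diag n t * mat_adjoint W"
  shows "trace_norm n X \<le> sqrt (Re (mtrace (X * pinv_sqrt n M * X * pinv_sqrt n M))) * sqrt (Re (mtrace M))"
proof -
  have Wc: "W \<in> carrier_mat n n" using W by (rule unitary_carrier)
  define X' where "X' = mat_adjoint W * X * W"
  define D where "D = real_diag n (inv_sqrt \<circ> t)"
  have X'c: "X' \<in> carrier_mat n n"
    unfolding X'_def using X(1) Wc by (meson mat_adjoint_carrier mult_carrier_mat)
  have hX': "hermitian X'" unfolding X'_def by (rule hermitian_conj[OF X(1) Wc X(2)])
  have zero': "X' $$ (i,j) = 0" if "i < n" "j < n" "t i = 0 \<or> t j = 0" for i j
    using that zero[of i j] zero[of j i] hermitian_index[OF X'c hX', of i j] by (auto simp: X'_def)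
  have XW: "X = W * X' * mat_adjoint W"
    unfolding X'_def by (rule unitary_conj_inverse[OF W X(1), symmetric])
  have "pinv_sqrt n M = W * D * mat_adjoint W"
    unfolding D_def M_def by (rule pinv_sqrt_unitary_diag[OF W refl])
  then have "X * pinv_sqrt n M * X * pinv_sqrt n M = W * (X' * D * X' * D) * mat_adjoint W"
    using X'c by (simp add: XW D_def unitary_conj_mult[OF W] mult_carrier_mat[of _ n n _ n])
  then have tr: "mtrace (X * pinv_sqrt n M * X * pinv_sqrt n M) = mtrace (X' * D * X' * D)"
    using mtrace_unitary_conj[OF unitary_adjoint[OF W], of "X' * D * X' * D"] X'c
    by (simp add: D_def mult_carrier_mat[of _ n n _ n])
  have tM: "Re (mtrace M) = (\<Sum>i<n. t i)"
    unfolding M_def by (simp add: mtrace_unitary_diag[OF W])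
  have tn: "trace_norm n X = trace_norm n X'"
    unfolding X'_def by (rule trace_norm_unitary_conj[OF X W, symmetric])
  have "trace_norm n X' \<le> sqrt (Re (mtrace (X' * D * X' * D))) * sqrt (\<Sum>i<n. t i)"
    unfolding D_def by (rule trace_norm_le_weighted_diag[OF X'c hX' t zero'])
  then show ?thesis by (simp only: tr tM tn)
qed

section \<open>The distance from uniform\<close>

lemma psd_spectral:
  assumes T: "psd n T"
  obtains U t where "unitary n U" "T = U * real_diag n t * mat_adjoint U" "\<And>i. i < n \<Longrightarrow> 0 \<le> t i"
proof -
  obtain U t where U: "unitary n U" and Teq: "T = U * real_diag n t * mat_adjoint U"
    using hermitian_spectral[OF psdD[OF T]] by blast
  have "psd n (real_diag n t)"
    using psd_conj[OF T unitary_carrier[OF U]] unitary_adjoint_conj_inverse[OF U, of "real_diag n t"]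
    by (simp add: Teq)
  then have "0 \<le> t i" if "i < n" for i
    using psd_diag_real(2)[of n "real_diag n t" i] that by (simp add: mat_diag_def)
  with U Teq that show ?thesis by blast
qed

lemma kron_one_unitary_diag:
  assumes U: "unitary dB U"
  shows "kron (1\<^sub>m dA) (U * real_diag dB t * mat_adjoint U) =
    kron (1\<^sub>m dA) U * real_diag (dA * dB) (\<lambda>k. t (k mod dB)) * mat_adjoint (kron (1\<^sub>m dA) U)"
proof -
  have Uc: "U \<in> carrier_mat dB dB" using U by (rule unitary_carrier)
  have D: "real_diag dB t \<in> carrier_mat dB dB" by simp
  have "kron (1\<^sub>m dA) (U * real_diag dB t * mat_adjoint U) =
      kron (1\<^sub>m dA) U * kron (1\<^sub>m dA) (real_diag dB t) * kron (1\<^sub>m dA) (mat_adjoint U)"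
    by (simp add: kron_one_mult[OF mult_carrier_mat[OF Uc D] mat_adjoint_carrier[OF Uc]]
        kron_one_mult[OF Uc D])
  then show ?thesis by (simp add: kron_one_diag mat_adjoint_kron_one[OF Uc])
qed

lemma kron_one_unitary_conj:
  assumes U: "U \<in> carrier_mat dB dB" and M: "M \<in> carrier_mat dB dB"
  shows "mat_adjoint (kron (1\<^sub>m dA) U) * kron (1\<^sub>m dA) M * kron (1\<^sub>m dA) U =
    kron (1\<^sub>m dA) (mat_adjoint U * M * U)"
  using kron_one_mult[OF mat_adjoint_carrier[OF U] M]
    kron_one_mult[OF mult_carrier_mat[OF mat_adjoint_carrier[OF U] M] U]
  by (simp add: mat_adjoint_kron_one[OF U])

lemma ptrace_A_kron_one_conj:
  assumes R: "R \<in> carrier_mat (dA * dB) (dA * dB)" and U: "U \<in> carrier_mat dB dB"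
  shows "ptrace_A dA dB (mat_adjoint (kron (1\<^sub>m dA) U) * R * kron (1\<^sub>m dA) U) =
    mat_adjoint U * ptrace_A dA dB R * U"
  using R U
  by (simp add: mat_adjoint_kron_one ptrace_A_mult_kron_one ptrace_A_kron_one_mult
      mult_carrier_mat[of _ "dA * dB" "dA * dB" _ "dA * dB"])

lemma supp_subset_conj_zero_row:
  assumes U: "unitary n U" and T: "T = U * real_diag n t * mat_adjoint U"
    and \<rho>: "\<rho> \<in> carrier_mat n n" and sp: "supp n \<rho> \<subseteq> supp n T"
    and b: "b < n" and c: "c < n" and tb: "t b = 0"
  shows "(mat_adjoint U * \<rho> * U) $$ (b,c) = 0"
proof -
  have Uc: "U \<in> carrier_mat n n" using U by (rule unitary_carrier)
  have UA: "mat_adjoint U \<in> carrier_mat n n" using Uc by simp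
  have Tc: "T \<in> carrier_mat n n" unfolding T using Uc UA by (simp add: mult_carrier_mat[of _ n n _ n])
  have "col U c \<in> carrier_vec n" using Uc by (simp add: carrier_vecI)
  then have "\<rho> *\<^sub>v col U c \<in> supp n \<rho>" unfolding supp_def by blast
  with sp obtain w where w: "w \<in> carrier_vec n" and yw: "\<rho> *\<^sub>v col U c = T *\<^sub>v w"
    unfolding supp_def by blast
  have DU: "real_diag n t * mat_adjoint U \<in> carrier_mat n n"
    using UA by (simp add: mult_carrier_mat[of _ n n _ n])
  have UT: "mat_adjoint U * T = real_diag n t * mat_adjoint U"
    unfolding T using Uc UA unitary_cancel_left[OF U DU]
    by (simp add: assoc_mult_mat[of _ n n _ n _ n] mult_carrier_mat[of _ n n _ n])
  have "(mat_adjoint U * \<rho> * U) $$ (b,c) = (mat_adjoint U * (\<rho> * U)) $$ (b,c)"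
    using assoc_mult_mat[OF UA \<rho> Uc] by simp
  also have "\<dots> = row (mat_adjoint U) b \<bullet> col (\<rho> * U) c" using b c UA Uc \<rho> by simp
  also have "col (\<rho> * U) c = \<rho> *\<^sub>v col U c" by (rule col_mult2[OF \<rho> Uc c])
  also have "row (mat_adjoint U) b \<bullet> (\<rho> *\<^sub>v col U c) = (mat_adjoint U *\<^sub>v (T *\<^sub>v w)) $ b"
    using b carrier_matD[OF UA] yw by simp
  also have "\<dots> = ((mat_adjoint U * T) *\<^sub>v w) $ b" using assoc_mult_mat_vec[OF UA Tc w] by simp
  also have "\<dots> = 0" using b w tb by (simp add: UT mat_diag_mult_left[OF UA] scalar_prod_def)
  finally show ?thesis .
qed

text \<open>The diagonal entries of the conjugated matrix at the indices \<open>a * dB + b\<close> are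
  nonnegative and sum to the vanishing diagonal entry \<open>b\<close> of its partial trace; a positive
  semidefinite matrix with a zero diagonal entry has a zero row.\<close>
lemma psd_conj_kron_one_zero_row:
  assumes R: "psd (dA * dB) R" and U: "unitary dB U" and k: "k < dA * dB"
    and z: "(mat_adjoint U * ptrace_A dA dB R * U) $$ (k mod dB, k mod dB) = 0"
    and j: "j < dA * dB"
  shows "(mat_adjoint (kron (1\<^sub>m dA) U) * R * kron (1\<^sub>m dA) U) $$ (k,j) = 0"
proof -
  have Uc: "U \<in> carrier_mat dB dB" using U by (rule unitary_carrier)
  have Rc: "R \<in> carrier_mat (dA * dB) (dA * dB)" using R by (rule psdD)
  define R' where "R' = mat_adjoint (kron (1\<^sub>m dA) U) * R * kron (1\<^sub>m dA) U"
  have R': "psd (dA * dB) R'" unfolding R'_def by (rule psd_conj[OF R kron_one_carrier[OF Uc]])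
  have ptr: "ptrace_A dA dB R' = mat_adjoint U * ptrace_A dA dB R * U"
    unfolding R'_def by (rule ptrace_A_kron_one_conj[OF Rc Uc])
  have "(\<Sum>a<dA. R' $$ (a * dB + k mod dB, a * dB + k mod dB)) = ptrace_A dA dB R' $$ (k mod dB, k mod dB)"
    using mod_less_of_less_mult[OF k] by (simp add: index_ptrace_A)
  then have "(\<Sum>a<dA. R' $$ (a * dB + k mod dB, a * dB + k mod dB)) = 0"
    using z by (simp add: ptr)
  then have "(\<Sum>a<dA. Re (R' $$ (a * dB + k mod dB, a * dB + k mod dB))) = 0"
    by (metis Re_sum zero_complex.sel(1))
  moreover have "\<forall>a\<in>{..<dA}. 0 \<le> Re (R' $$ (a * dB + k mod dB, a * dB + k mod dB))"
    using psd_diag_real(2)[OF R'] mod_less_of_less_mult[OF k] by simp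
  ultimately have "\<forall>a\<in>{..<dA}. Re (R' $$ (a * dB + k mod dB, a * dB + k mod dB)) = 0"
    using sum_nonneg_eq_0_iff[of "{..<dA}" "\<lambda>a. Re (R' $$ (a * dB + k mod dB, a * dB + k mod dB))"]
    by simp
  then have "Re (R' $$ (k div dB * dB + k mod dB, k div dB * dB + k mod dB)) = 0"
    using div_less_of_less_mult[OF k] by blast
  then have "R' $$ (k,k) = 0" using psd_diag_real(1)[OF R' k] by simp
  then show ?thesis unfolding R'_def[symmetric] by (rule psd_diag_zero_row[OF R' k _ j])
qed

lemma marginal_deviation_conj_zero_row:
  assumes R: "psd (dA * dB) R" and U: "unitary dB U" and T: "T = U * real_diag dB t * mat_adjoint U"
    and sp: "supp dB (ptrace_A dA dB R) \<subseteq> supp dB T"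
    and k: "k < dA * dB" and tk: "t (k mod dB) = 0" and j: "j < dA * dB"
  defines "W \<equiv> kron (1\<^sub>m dA) U"
  shows "(mat_adjoint W * (R - kron ((1 / of_nat dA) \<cdot>\<^sub>m 1\<^sub>m dA) (ptrace_A dA dB R)) * W) $$ (k,j) = 0"
proof -
  define N where "N = dA * dB"
  define \<rho> where "\<rho> = ptrace_A dA dB R"
  define c :: complex where "c = 1 / of_nat dA"
  define Q where "Q = mat_adjoint U * \<rho> * U"
  have Uc: "U \<in> carrier_mat dB dB" using U by (rule unitary_carrier)
  have \<rho>c: "\<rho> \<in> carrier_mat dB dB" by (simp add: \<rho>_def)
  have Rc: "R \<in> carrier_mat N N" using psdD(1)[OF R] by (simp add: N_def)
  have Wc: "W \<in> carrier_mat N N" unfolding W_def N_def by (rule kron_one_carrier[OF Uc])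
  have Lc: "kron (1\<^sub>m dA) \<rho> \<in> carrier_mat N N" unfolding N_def by (rule kron_one_carrier[OF \<rho>c])
  have Qc: "Q \<in> carrier_mat dB dB"
    unfolding Q_def using Uc \<rho>c by (simp add: mult_carrier_mat[of _ dB dB _ dB])
  have km: "k mod dB < dB" and jm: "j mod dB < dB"
    using k j by (simp_all add: mod_less_of_less_mult)
  have Qk: "Q $$ (k mod dB, l) = 0" if "l < dB" for l
    unfolding Q_def \<rho>_def by (rule supp_subset_conj_zero_row[OF U T _ sp km that tk]) simp
  have "mat_adjoint W * (R - c \<cdot>\<^sub>m kron (1\<^sub>m dA) \<rho>) * W =
      mat_adjoint W * R * W - c \<cdot>\<^sub>m (mat_adjoint W * kron (1\<^sub>m dA) \<rho> * W)"
    using Rc Wc Lc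
    by (simp add: mult_minus_distrib_mat[of _ N N] minus_mult_distrib_mat[of _ N N]
        mult_smult_distrib[of _ N N] mult_smult_assoc_mat[of _ N N] mult_carrier_mat[of _ N N _ N])
  also have "mat_adjoint W * kron (1\<^sub>m dA) \<rho> * W = kron (1\<^sub>m dA) Q"
    unfolding W_def Q_def by (rule kron_one_unitary_conj[OF Uc \<rho>c])
  finally have "(mat_adjoint W * (R - c \<cdot>\<^sub>m kron (1\<^sub>m dA) \<rho>) * W) $$ (k,j) =
      (mat_adjoint W * R * W) $$ (k,j) - c * kron (1\<^sub>m dA) Q $$ (k,j)"
    using k j Rc Wc carrier_matD[OF kron_one_carrier[OF Qc, of dA]]
    by (simp add: N_def mult_carrier_mat[of _ "dA * dB" "dA * dB" _ "dA * dB"] del: index_mult_mat(1))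
  also have "(mat_adjoint W * R * W) $$ (k,j) = 0"
    unfolding W_def by (rule psd_conj_kron_one_zero_row[OF R U k _ j]) (use Qk km in \<open>simp add: Q_def \<rho>_def\<close>)
  also have "kron (1\<^sub>m dA) Q $$ (k,j) = 0"
    using index_kron_one[OF Qc k j] Qk[OF jm] by simp
  finally show ?thesis by (simp add: c_def \<rho>_def kron_smult_one)
qed

lemma hermitian_marginal_deviation:
  assumes R: "psd (dA * dB) R"
  shows "hermitian (R - kron ((1 / of_nat dA) \<cdot>\<^sub>m 1\<^sub>m dA) (ptrace_A dA dB R))"
proof -
  have Rc: "R \<in> carrier_mat (dA * dB) (dA * dB)" and hR: "hermitian R" using psdD[OF R] by auto
  have h\<rho>: "hermitian (ptrace_A dA dB R)" by (rule hermitian_ptrace_A[OF Rc hR])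
  have Ec: "kron (1\<^sub>m dA) (ptrace_A dA dB R) \<in> carrier_mat (dA * dB) (dA * dB)" by simp
  show ?thesis
    unfolding hermitian_def kron_smult_one
  proof (rule eq_matI)
    fix i j assume "i < dim_row (R - (1 / of_nat dA) \<cdot>\<^sub>m kron (1\<^sub>m dA) (ptrace_A dA dB R))"
      "j < dim_col (R - (1 / of_nat dA) \<cdot>\<^sub>m kron (1\<^sub>m dA) (ptrace_A dA dB R))"
    then have i: "i < dA * dB" and j: "j < dA * dB" using Ec by auto
    show "mat_adjoint (R - (1 / of_nat dA) \<cdot>\<^sub>m kron (1\<^sub>m dA) (ptrace_A dA dB R)) $$ (i,j) =
        (R - (1 / of_nat dA) \<cdot>\<^sub>m kron (1\<^sub>m dA) (ptrace_A dA dB R)) $$ (i,j)"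
      using i j carrier_matD[OF Rc] carrier_matD[OF Ec] hermitian_index[OF Rc hR j i] hermitian_index[OF Ec _ j i]
        h\<rho> mat_adjoint_kron_one[of "ptrace_A dA dB R" dB dA]
      by (simp add: hermitian_def)
  qed (use carrier_matD[OF Rc] carrier_matD[OF Ec] in auto)
qed

lemma trace_norm_marginal_deviation_le:
  assumes R: "psd (dA * dB) R" and T: "psd dB T" and sp: "supp dB (ptrace_A dA dB R) \<subseteq> supp dB T"
  defines "X \<equiv> R - kron ((1 / of_nat dA) \<cdot>\<^sub>m 1\<^sub>m dA) (ptrace_A dA dB R)"
    and "K \<equiv> kron (1\<^sub>m dA) (pinv_sqrt dB T)"
  shows "trace_norm (dA * dB) X \<le> sqrt (Re (mtrace (X * K * X * K))) * sqrt (of_nat dA * Re (mtrace T))"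
proof -
  obtain U t where U: "unitary dB U" and Teq: "T = U * real_diag dB t * mat_adjoint U"
    and t: "\<And>i. i < dB \<Longrightarrow> 0 \<le> t i"
    using psd_spectral[OF T] by blast
  define W where "W = kron (1\<^sub>m dA) U"
  define tt where "tt k = t (k mod dB)" for k
  have W: "unitary (dA * dB) W" unfolding W_def by (rule unitary_kron_one[OF U])
  have M: "kron (1\<^sub>m dA) T = W * real_diag (dA * dB) tt * mat_adjoint W"
    unfolding Teq W_def tt_def by (rule kron_one_unitary_diag[OF U])
  have "K = W * real_diag (dA * dB) (inv_sqrt \<circ> tt) * mat_adjoint W"
    unfolding K_def pinv_sqrt_unitary_diag[OF U Teq] kron_one_unitary_diag[OF U]
    by (simp add: W_def tt_def comp_def)
  also have "\<dots> = pinv_sqrt (dA * dB) (kron (1\<^sub>m dA) T)"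
    by (rule pinv_sqrt_unitary_diag[OF W M, symmetric])
  finally have K: "K = pinv_sqrt (dA * dB) (kron (1\<^sub>m dA) T)" .
  have Xc: "X \<in> carrier_mat (dA * dB) (dA * dB)"
    unfolding X_def by (rule minus_kron_uniform_carrier) simp
  have hX: "hermitian X" unfolding X_def by (rule hermitian_marginal_deviation[OF R])
  have tt: "0 \<le> tt k" if "k < dA * dB" for k
    using t mod_less_of_less_mult[OF that] by (simp add: tt_def)
  have zero: "(mat_adjoint W * X * W) $$ (i,j) = 0" if "i < dA * dB" "j < dA * dB" "tt i = 0" for i j
    using marginal_deviation_conj_zero_row[OF R U Teq sp] that by (simp add: X_def W_def tt_def)
  have "trace_norm (dA * dB) X \<le> sqrt (Re (mtrace (X * K * X * K))) * sqrt (Re (mtrace (kron (1\<^sub>m dA) T)))"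
    unfolding K M by (rule trace_norm_le_weighted[OF Xc hX W tt zero])
  also have "mtrace (kron (1\<^sub>m dA) T) = of_nat dA * mtrace T"
    by (rule mtrace_kron_one[OF psdD(1)[OF T]])
  finally show ?thesis by simp
qed

lemma mtrace_square_minus_smult:
  assumes A: "A \<in> carrier_mat n n" and M: "M \<in> carrier_mat n n"
  shows "mtrace ((A - c \<cdot>\<^sub>m M) * (A - c \<cdot>\<^sub>m M)) =
    mtrace (A * A) - 2 * c * mtrace (A * M) + c * c * mtrace (M * M)"
proof -
  have cM: "c \<cdot>\<^sub>m M \<in> carrier_mat n n" using M by simp
  have "(A - c \<cdot>\<^sub>m M) * (A - c \<cdot>\<^sub>m M) = (A * A - A * (c \<cdot>\<^sub>m M)) - (c \<cdot>\<^sub>m M * A - c \<cdot>\<^sub>m M * (c \<cdot>\<^sub>m M))"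
    unfolding minus_mult_distrib_mat[OF A cM minus_carrier_mat[OF cM]]
      mult_minus_distrib_mat[OF A A cM] mult_minus_distrib_mat[OF cM A cM] ..
  then have "mtrace ((A - c \<cdot>\<^sub>m M) * (A - c \<cdot>\<^sub>m M)) =
      mtrace (A * A) - mtrace (A * (c \<cdot>\<^sub>m M)) - (mtrace (c \<cdot>\<^sub>m M * A) - mtrace (c \<cdot>\<^sub>m M * (c \<cdot>\<^sub>m M)))"
    using A cM by (simp add: mtrace_minus[of _ n] mult_carrier_mat[of _ n n _ n] minus_carrier_mat)
  also have "mtrace (c \<cdot>\<^sub>m M * A) = mtrace (A * (c \<cdot>\<^sub>m M))" by (rule mtrace_mult_comm[OF cM A])
  also have "mtrace (A * (c \<cdot>\<^sub>m M)) = c * mtrace (A * M)"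
    using A M by (simp add: mult_smult_distrib[OF A M] mtrace_smult[of _ n] mult_carrier_mat[of _ n n _ n])
  also have "mtrace (c \<cdot>\<^sub>m M * (c \<cdot>\<^sub>m M)) = c * c * mtrace (M * M)"
    using M by (simp add: mult_smult_distrib[OF cM M] mult_smult_assoc_mat[OF M M] mtrace_smult[of _ n]
        mult_carrier_mat[of _ n n _ n])
  finally show ?thesis by (simp add: algebra_simps)
qed

lemma marginal_deviation_mult_kron_one:
  assumes R: "R \<in> carrier_mat (dA * dB) (dA * dB)" and P: "P \<in> carrier_mat dB dB"
  shows "(R - kron ((1 / of_nat dA) \<cdot>\<^sub>m 1\<^sub>m dA) (ptrace_A dA dB R)) * kron (1\<^sub>m dA) P =
    R * kron (1\<^sub>m dA) P - (1 / of_nat dA) \<cdot>\<^sub>m kron (1\<^sub>m dA) (ptrace_A dA dB R * P)"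
proof -
  have L: "kron (1\<^sub>m dA) (ptrace_A dA dB R) \<in> carrier_mat (dA * dB) (dA * dB)" by simp
  show ?thesis
    using R L kron_one_carrier[OF P, of dA] kron_one_mult[OF ptrace_A_carrier P, of dA dA R]
    by (simp add: kron_smult_one minus_mult_distrib_mat[of _ "dA * dB" "dA * dB"]
        mult_smult_assoc_mat[of _ "dA * dB" "dA * dB"])
qed

lemma mtrace_square_marginal_deviation:
  fixes R P :: "complex mat"
  assumes R: "R \<in> carrier_mat (dA * dB) (dA * dB)" and P: "P \<in> carrier_mat dB dB" and dA: "0 < dA"
  defines "X \<equiv> R - kron ((1 / of_nat dA) \<cdot>\<^sub>m 1\<^sub>m dA) (ptrace_A dA dB R)"
    and "K \<equiv> kron (1\<^sub>m dA) P"
  shows "mtrace (X * K * X * K) =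
    mtrace (R * K * (R * K)) - mtrace (ptrace_A dA dB R * P * ptrace_A dA dB R * P) / of_nat dA"
proof -
  define N where "N = dA * dB"
  define \<rho> where "\<rho> = ptrace_A dA dB R"
  define c :: complex where "c = 1 / of_nat dA"
  define M where "M = kron (1\<^sub>m dA) (\<rho> * P)"
  have Rc: "R \<in> carrier_mat N N" using R by (simp add: N_def)
  have \<rho>c: "\<rho> \<in> carrier_mat dB dB" by (simp add: \<rho>_def)
  have \<rho>P: "\<rho> * P \<in> carrier_mat dB dB" using \<rho>c P by simp
  have Kc: "K \<in> carrier_mat N N" unfolding K_def N_def by (rule kron_one_carrier[OF P])
  have Mc: "M \<in> carrier_mat N N" unfolding M_def N_def by (rule kron_one_carrier[OF \<rho>P])
  have RK: "R * K \<in> carrier_mat N N" using Rc Kc by (simp add: mult_carrier_mat[of _ N N _ N])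
  have Xc: "X \<in> carrier_mat N N"
    unfolding X_def N_def by (rule minus_kron_uniform_carrier) simp
  have XKeq: "X * K = R * K - c \<cdot>\<^sub>m M"
    unfolding X_def K_def M_def c_def \<rho>_def by (rule marginal_deviation_mult_kron_one[OF R P])
  have "X * K * X * K = (X * K) * (X * K)"
    using Xc Kc by (simp add: assoc_mult_mat[of _ N N _ N _ N] mult_carrier_mat[of _ N N _ N])
  then have XK: "X * K * X * K = (R * K - c \<cdot>\<^sub>m M) * (R * K - c \<cdot>\<^sub>m M)"
    by (simp only: XKeq)
  have "mtrace (R * K * M) = mtrace (\<rho> * P * \<rho> * P)"
    using mtrace_mult_kron_one[OF R mult_carrier_mat[OF P \<rho>P]] kron_one_mult[OF P \<rho>P, of dA] Rc Kc Mc
      \<rho>c P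
    by (simp add: K_def M_def \<rho>_def N_def assoc_mult_mat[of _ "dA * dB" "dA * dB" _ "dA * dB" _ "dA * dB"]
        assoc_mult_mat[of _ dB dB _ dB _ dB])
  moreover have "mtrace (M * M) = of_nat dA * mtrace (\<rho> * P * \<rho> * P)"
    using mtrace_kron_one[OF mult_carrier_mat[OF \<rho>P \<rho>P], of dA] kron_one_mult[OF \<rho>P \<rho>P, of dA] \<rho>c P
    by (simp add: M_def assoc_mult_mat[of _ dB dB _ dB _ dB])
  moreover have "c * c * of_nat dA = c" using dA by (simp add: c_def)
  ultimately have "mtrace (X * K * X * K) = mtrace (R * K * (R * K)) - c * mtrace (\<rho> * P * \<rho> * P)"
    unfolding XK mtrace_square_minus_smult[OF RK Mc] by (auto simp: algebra_simps)
  then show ?thesis by (simp add: c_def \<rho>_def)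
qed

lemma le_sqrt_mult_mono:
  fixes a z s c :: real
  assumes "0 \<le> a" "a \<le> sqrt z * sqrt s" "0 < s" "s \<le> c"
  shows "a \<le> sqrt z * sqrt c"
proof -
  have "0 \<le> sqrt z * sqrt s" using assms(1,2) by linarith
  then have "0 \<le> sqrt z" using assms(3) by (simp add: zero_le_mult_iff)
  then show ?thesis using assms(2,4) by (meson mult_left_mono order_trans real_sqrt_le_mono)
qed

lemma d_u_le_trace_norm_marginal:
  assumes R: "psd (dA * dB) R"
  shows "d_u dA dB R \<le> trace_norm (dA * dB) (R - kron ((1 / of_nat dA) \<cdot>\<^sub>m 1\<^sub>m dA) (ptrace_A dA dB R)) / 2"
  unfolding d_u_def
proof (rule cInf_lower)
  show "trace_norm (dA * dB) (R - kron ((1 / of_nat dA) \<cdot>\<^sub>m 1\<^sub>m dA) (ptrace_A dA dB R)) / 2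
      \<in> {trace_norm (dA * dB) (R - kron ((1 / of_nat dA) \<cdot>\<^sub>m 1\<^sub>m dA) S) / 2 | S.
          psd dB S \<and> mtrace S = mtrace (ptrace_A dA dB R)}"
    using psd_ptrace_A[OF R] by blast
  show "bdd_below {trace_norm (dA * dB) (R - kron ((1 / of_nat dA) \<cdot>\<^sub>m 1\<^sub>m dA) S) / 2 | S.
      psd dB S \<and> mtrace S = mtrace (ptrace_A dA dB R)}"
  proof (rule bdd_belowI)
    fix x assume "x \<in> {trace_norm (dA * dB) (R - kron ((1 / of_nat dA) \<cdot>\<^sub>m 1\<^sub>m dA) S) / 2 | S.
      psd dB S \<and> mtrace S = mtrace (ptrace_A dA dB R)}"
    then obtain S where S: "psd dB S"
      and x: "x = trace_norm (dA * dB) (R - kron ((1 / of_nat dA) \<cdot>\<^sub>m 1\<^sub>m dA) S) / 2" by blast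
    have "0 \<le> trace_norm (dA * dB) (R - kron ((1 / of_nat dA) \<cdot>\<^sub>m 1\<^sub>m dA) S)"
      by (rule trace_norm_nonneg[OF minus_kron_uniform_carrier[OF psdD(1)[OF S]]])
    then show "0 \<le> x" using x by simp
  qed
qed

theorem lemma4:
  fixes dA dB :: nat and R T :: "complex mat"
  assumes "psd (dA * dB) R"
    and "0 < Re (mtrace R)" and "Re (mtrace R) \<le> 1"
    and "psd dB T"
    and "0 < Re (mtrace T)" and "Re (mtrace T) \<le> 1"
    and "supp dB (ptrace_A dA dB R) \<subseteq> supp dB T"
  shows "d_u dA dB R \<le>
     (1/2) * sqrt (Re (of_nat dA * Gamma_C dA dB R T
        - mtrace (ptrace_A dA dB R * pinv_sqrt dB T * ptrace_A dA dB R * pinv_sqrt dB T)))"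
proof -
  define X where "X = R - kron ((1 / of_nat dA) \<cdot>\<^sub>m 1\<^sub>m dA) (ptrace_A dA dB R)"
  define K where "K = kron (1\<^sub>m dA) (pinv_sqrt dB T)"
  define Z where "Z = Re (of_nat dA * Gamma_C dA dB R T
      - mtrace (ptrace_A dA dB R * pinv_sqrt dB T * ptrace_A dA dB R * pinv_sqrt dB T))"
  have Rc: "R \<in> carrier_mat (dA * dB) (dA * dB)" using assms(1) by (rule psdD)
  have dA: "0 < dA" using assms(2) Rc by (cases dA) (auto simp: mtrace_def)
  have "Re (mtrace (X * K * X * K)) = Z / of_nat dA"
    using mtrace_square_marginal_deviation[OF Rc pinv_sqrt_carrier[OF psdD[OF assms(4)]] dA] dA
    by (simp add: X_def K_def Z_def Gamma_C_def Let_def diff_divide_distrib)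
  then have tn: "trace_norm (dA * dB) X \<le> sqrt (Z / of_nat dA) * sqrt (of_nat dA * Re (mtrace T))"
    using trace_norm_marginal_deviation_le[OF assms(1,4,7)] by (simp add: X_def K_def)
  have Xc: "X \<in> carrier_mat (dA * dB) (dA * dB)"
    unfolding X_def by (rule minus_kron_uniform_carrier) simp
  have "trace_norm (dA * dB) X \<le> sqrt (Z / of_nat dA) * sqrt (of_nat dA)"
    by (rule le_sqrt_mult_mono[OF trace_norm_nonneg[OF Xc] tn]) (use dA assms(5,6) in simp_all)
  also have "\<dots> = sqrt Z" using dA by (simp add: real_sqrt_mult[symmetric])
  finally show ?thesis
    using d_u_le_trace_norm_marginal[OF assms(1)] by (simp add: X_def Z_def)
qed

end
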